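(* Let $\mathcal T$ be a Galton–Watson tree with offspring distribution $\xi$, and assume $P(\xi=0)>0$ and $P(\xi>1)>0$. Suppose that $n\to\infty$ with $n\equiv1\pmod{\mathrm{span}(\xi)}$, and let $\tau$ be the unique number in $[0,\rho]$ with $\Psi(\tau)=1$ if $\nu\ge1$, and $\tau=\rho$ if $\nu<1$ (all computed for the weight sequence $w_k=P(\xi=k)$). Then $$\frac1n\log P(|\mathcal T|=n)\to\log\Phi(\tau)-\log\tau=\log\inf_{0\le t<\infty}\frac{\Phi(t)}{t}\in(-\infty,0].$$ If $E\xi=1$, or if $E\xi<1$ and $\rho=1$, then the limit is $0$; otherwise it is strictly negative. In other words, $P(|\mathcal T|=n)$ decays exponentially fast in the supercritical case (then $\tau<1$) and in the subcritical case with $\rho>1$ (then $\tau>1$), but only subexponentially in the critical case and in the subcritical case with $\rho=1$ (then $\tau=1$).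
   Context: $\Phi(t)=E t^\xi=\sum_kP(\xi=k)t^k$, $\rho\in[1,\infty]$ its radius of convergence; for $t$ with $\Phi(t)<\infty$, $\Psi(t)=t\Phi'(t)/\Phi(t)$; if $\Phi(\rho)=\infty$, $\Psi(\rho)=\lim_{t\uparrow\rho}\Psi(t)$; $\nu=\Psi(\rho)$. $\mathrm{span}(\xi)$ is the largest $d$ dividing every $k$ with $P(\xi=k)>0$. A Galton–Watson tree is the family tree in which each node independently has a number of children distributed as $\xi$; $|\mathcal T|$ is its number of nodes. *)

theory Defs
  imports "HOL-Analysis.Analysis"
begin

text \<open>Finite rooted ordered (plane) trees; a Galton--Watson tree restricted to finite
outcomes has law: P(T = t) = product over nodes v of p(number of children of v).\<close>

datatype ptree = Node "ptree list"

fun node_count :: "ptree \<Rightarrow> nat" where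
  "node_count (Node ts) = 1 + sum_list (map node_count ts)"

fun gw_prob :: "(nat \<Rightarrow> real) \<Rightarrow> ptree \<Rightarrow> real" where
  "gw_prob p (Node ts) = p (length ts) * prod_list (map (gw_prob p) ts)"

definition gw_size_prob :: "(nat \<Rightarrow> real) \<Rightarrow> nat \<Rightarrow> real" where
  "gw_size_prob p n = (\<Sum>t\<in>{t. node_count t = n}. gw_prob p t)"

definition offspring_dist :: "(nat \<Rightarrow> real) \<Rightarrow> bool" where
  "offspring_dist p \<longleftrightarrow> (\<forall>k. 0 \<le> p k) \<and> p sums 1"

definition gw_span :: "(nat \<Rightarrow> real) \<Rightarrow> nat" where
  "gw_span p = Gcd {k. 0 < p k}"

definition PhiE :: "(nat \<Rightarrow> real) \<Rightarrow> real \<Rightarrow> ereal" where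
  "PhiE p t = (\<Sum>k. ereal (p k * t ^ k))"

definition dPhiE :: "(nat \<Rightarrow> real) \<Rightarrow> real \<Rightarrow> ereal" where
  "dPhiE p t = (\<Sum>k. ereal (real k * p k * t ^ (k - 1)))"

definition psi :: "(nat \<Rightarrow> real) \<Rightarrow> real \<Rightarrow> ereal" where
  "psi p t = ereal t * dPhiE p t / PhiE p t"

text \<open>nu = Psi(rho), with Psi(rho) = lim_{t \<up> rho} Psi(t) when Phi(rho) = \<infinity>
  (in particular when rho = \<infinity>).\<close>
definition gw_nu :: "(nat \<Rightarrow> real) \<Rightarrow> ereal" where
  "gw_nu p = (let \<rho> = conv_radius p in
     if \<rho> \<noteq> \<infinity> \<and> PhiE p (real_of_ereal \<rho>) \<noteq> \<infinity> then psi p (real_of_ereal \<rho>)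
     else if \<rho> = \<infinity> then Lim at_top (psi p)
     else Lim (at_left (real_of_ereal \<rho>)) (psi p))"

definition PsiX :: "(nat \<Rightarrow> real) \<Rightarrow> real \<Rightarrow> ereal" where
  "PsiX p t = (if PhiE p t \<noteq> \<infinity> then psi p t else gw_nu p)"

definition gw_tau :: "(nat \<Rightarrow> real) \<Rightarrow> real" where
  "gw_tau p = (if 1 \<le> gw_nu p
     then (THE \<tau>. 0 \<le> \<tau> \<and> ereal \<tau> \<le> conv_radius p \<and> PsiX p \<tau> = 1)
     else real_of_ereal (conv_radius p))"

definition gw_mean :: "(nat \<Rightarrow> real) \<Rightarrow> ereal" where
  "gw_mean p = (\<Sum>k. ereal (real k * p k))"

end

theory Submission
  imports Defs
begin

text \<open>Write \<open>a\<^sub>n = P(|T| = n)\<close> and \<open>G(x) = \<Sum> a\<^sub>n x\<^sup>n\<close>; decomposing a tree at its root gives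
  \<open>G = x \<Phi>(G)\<close>. Let \<open>m = \<Phi>(\<tau>)/\<tau>\<close>. By convexity of \<open>t \<mapsto> t\<^sup>k\<close> (tangent at \<open>\<tau>\<close>), \<open>m\<close> is
  the minimum of \<open>\<Phi>(t)/t\<close>, and \<open>\<tau>\<close> is where \<open>\<Psi>\<close> crosses \<open>1\<close> (or \<open>\<rho>\<close> if it never does).

  Upper bound: \<open>x \<Phi>(t) \<le> t\<close> implies \<open>G(x) \<le> t\<close>; taking \<open>t = \<tau>\<close>, \<open>x = 1/m\<close> gives
  \<open>a\<^sub>n \<le> \<tau> m\<^sup>n\<close>. Lower bound: grafting one tree onto a leaf of another shows that
  \<open>b\<^sub>n = a\<^sub>n\<^sub>+\<^sub>1 / p\<^sub>0\<close> is supermultiplicative, and a gcd argument shows \<open>b\<^sub>n > 0\<close> for all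
  large multiples \<open>n\<close> of the span. Hence \<open>ln a\<^sub>n / n\<close> is eventually at least
  \<open>ln b\<^sub>q / q - \<epsilon>\<close> for every \<open>q\<close> (Fekete), and \<open>sup\<^sub>q ln b\<^sub>q / q \<ge> ln m\<close> since otherwise \<open>G\<close>
  would converge at some \<open>x > 1/m\<close> with \<open>z = G(x)\<close> satisfying \<open>\<Phi>(z)/z \<le> 1/x < m\<close>.\<close>

section \<open>Plane trees and their size generating function\<close>

lemma node_count_ge_1: "1 \<le> node_count t"
  by (cases t) auto

lemma length_le_sum_node_count: "length ts \<le> sum_list (map node_count ts)"
proof (induction ts)
  case (Cons a ts)
  then show ?case using node_count_ge_1[of a] by simp
qed simp

lemma node_count_le_sum_children: "c \<in> set ts \<Longrightarrow> node_count c \<le> sum_list (map node_count ts)"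
  by (induction ts) auto

lemma trees_Suc_subset_Node_lists:
  "{t. node_count t \<le> Suc n} \<subseteq> Node ` {ts. set ts \<subseteq> {t. node_count t \<le> n} \<and> length ts \<le> n}"
proof
  fix t assume "t \<in> {t. node_count t \<le> Suc n}"
  then obtain ts where t: "t = Node ts" and le: "sum_list (map node_count ts) \<le> n"
    by (cases t) auto
  have "length ts \<le> n" using length_le_sum_node_count[of ts] le by linarith
  moreover have "set ts \<subseteq> {t. node_count t \<le> n}"
    using node_count_le_sum_children le by fastforce
  ultimately show "t \<in> Node ` {ts. set ts \<subseteq> {t. node_count t \<le> n} \<and> length ts \<le> n}"
    using t by blast
qed

lemma no_tree_of_size_0: "{t. node_count t = 0} = {}"
proof -
  have "node_count t \<noteq> 0" for t using node_count_ge_1[of t] by linarith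
  then show ?thesis by blast
qed

lemma finite_node_count_le: "finite {t. node_count t \<le> n}"
proof (induction n)
  case 0
  then show ?case by (simp only: le_zero_eq no_tree_of_size_0 finite.emptyI)
next
  case (Suc n)
  then show ?case
    by (rule finite_subset[OF trees_Suc_subset_Node_lists finite_imageI[OF finite_lists_length_le]])
qed

lemma finite_node_count_eq: "finite {t. node_count t = n}"
  by (rule finite_subset[OF _ finite_node_count_le[of n]]) auto

lemma sum_prod_list_lists_length:
  fixes f :: "'a \<Rightarrow> 'b::comm_semiring_1"
  shows "(\<Sum>ts | set ts \<subseteq> A \<and> length ts = k. prod_list (map f ts)) = sum f A ^ k"
proof (induction k)
  case 0
  have "{ts. set ts \<subseteq> A \<and> length ts = 0} = {[]}" by auto
  then show ?case by simp
next
  case (Suc k)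
  have inj: "inj_on (\<lambda>(ts, a). a # ts) ({ts. set ts \<subseteq> A \<and> length ts = k} \<times> A)"
    by (auto simp: inj_on_def)
  have "(\<Sum>ts | set ts \<subseteq> A \<and> length ts = Suc k. prod_list (map f ts))
      = (\<Sum>(ts, a) \<in> {ts. set ts \<subseteq> A \<and> length ts = k} \<times> A. f a * prod_list (map f ts))"
    unfolding lists_length_Suc_eq by (subst sum.reindex[OF inj]) (auto intro!: sum.cong)
  also have "\<dots> = sum f A * (\<Sum>ts | set ts \<subseteq> A \<and> length ts = k. prod_list (map f ts))"
    by (subst sum.cartesian_product[symmetric]) (simp add: sum_distrib_left sum_distrib_right)
  finally show ?case using Suc by simp
qed

lemma gw_size_prob_0: "gw_size_prob p 0 = 0"
  by (simp add: gw_size_prob_def no_tree_of_size_0)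

lemma gw_size_prob_1: "gw_size_prob p 1 = p 0"
proof -
  have "{t. node_count t = 1} = {Node []}"
  proof (intro set_eqI iffI)
    fix t assume "t \<in> {t. node_count t = 1}"
    then obtain ts where t: "t = Node ts" "sum_list (map node_count ts) = 0" by (cases t) auto
    then have "length ts = 0" using length_le_sum_node_count[of ts] by linarith
    then have "ts = []" by simp
    then show "t \<in> {Node []}" using t by simp
  qed simp
  then show ?thesis by (simp add: gw_size_prob_def)
qed

definition gw_weight :: "(nat \<Rightarrow> real) \<Rightarrow> real \<Rightarrow> ptree \<Rightarrow> real" where
  "gw_weight p x t = gw_prob p t * x ^ node_count t"

definition gw_size_gf_upto :: "(nat \<Rightarrow> real) \<Rightarrow> nat \<Rightarrow> real \<Rightarrow> real" where
  "gw_size_gf_upto p N x = (\<Sum>n\<le>N. gw_size_prob p n * x ^ n)"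

lemma gw_size_gf_upto_eq_sum_trees:
  "gw_size_gf_upto p N x = (\<Sum>t | node_count t \<le> N. gw_weight p x t)"
proof -
  have "{t. node_count t \<le> N} = (\<Union>n\<le>N. {t. node_count t = n})" by auto
  then have "(\<Sum>t | node_count t \<le> N. gw_weight p x t)
      = (\<Sum>n\<le>N. \<Sum>t | node_count t = n. gw_weight p x t)"
    by (simp only:) (rule sum.UNION_disjoint; auto simp: finite_node_count_eq)
  then show ?thesis
    by (simp add: gw_size_gf_upto_def gw_size_prob_def gw_weight_def sum_distrib_right)
qed

lemma gw_weight_Node: "gw_weight p x (Node ts) = p (length ts) * x * prod_list (map (gw_weight p x) ts)"
proof -
  have "prod_list (map (gw_weight p x) ts)
      = prod_list (map (gw_prob p) ts) * x ^ sum_list (map node_count ts)"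
    by (induction ts) (simp_all add: gw_weight_def power_add)
  then show ?thesis by (simp add: gw_weight_def)
qed

lemma sum_gw_weight_Node_lists:
  "(\<Sum>t \<in> Node ` {ts. set ts \<subseteq> {t. node_count t \<le> N} \<and> length ts < K}. gw_weight p x t)
    = (\<Sum>k<K. p k * x * gw_size_gf_upto p N x ^ k)"
proof -
  define T where "T = {t. node_count t \<le> N}"
  have "{ts. set ts \<subseteq> T \<and> length ts < K} = (\<Union>k<K. {ts. set ts \<subseteq> T \<and> length ts = k})"
    by auto
  then have "(\<Sum>t \<in> Node ` {ts. set ts \<subseteq> T \<and> length ts < K}. gw_weight p x t)
      = (\<Sum>k<K. \<Sum>ts | set ts \<subseteq> T \<and> length ts = k. gw_weight p x (Node ts))"
    by (simp add: sum.reindex inj_on_def)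
      (rule sum.UNION_disjoint; auto simp: finite_lists_length_eq T_def finite_node_count_le)
  also have "\<dots> = (\<Sum>k<K. \<Sum>ts | set ts \<subseteq> T \<and> length ts = k.
      p k * x * prod_list (map (gw_weight p x) ts))"
    by (intro sum.cong refl) (simp add: gw_weight_Node)
  also have "\<dots> = (\<Sum>k<K. p k * x * gw_size_gf_upto p N x ^ k)"
    by (simp add: sum_distrib_left[symmetric] sum_prod_list_lists_length
        gw_size_gf_upto_eq_sum_trees T_def)
  finally show ?thesis unfolding T_def .
qed

text \<open>Grafting \<open>s\<close> onto the leftmost leaf of \<open>t\<close> merges a leaf of \<open>t\<close> with the root of \<open>s\<close>;
  it loses exactly one factor \<open>p 0\<close> and is injective for fixed size of \<open>s\<close>.\<close>

fun graft :: "ptree \<Rightarrow> ptree \<Rightarrow> ptree" where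
  "graft (Node []) s = s"
| "graft (Node (c # cs)) s = Node (graft c s # cs)"

lemma node_count_graft: "node_count (graft t s) = node_count t + node_count s - 1"
proof (induction t s rule: graft.induct)
  case (2 c cs s)
  then show ?case using node_count_ge_1[of c] node_count_ge_1[of s] by simp
qed simp

lemma gw_prob_graft: "gw_prob p (graft t s) * p 0 = gw_prob p t * gw_prob p s"
  by (induction t s rule: graft.induct) auto

lemma graft_inj:
  "graft t s = graft t' s' \<Longrightarrow> node_count s = node_count s' \<Longrightarrow> t = t' \<and> s = s'"
proof (induction t s arbitrary: t' rule: graft.induct)
  case (1 s)
  obtain ts' where t': "t' = Node ts'" by (cases t')
  show ?case
  proof (cases ts')
    case (Cons c' cs')
    then have "node_count s = node_count (graft c' s') + sum_list (map node_count cs') + 1"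
      using 1 t' by simp
    then show ?thesis using 1 node_count_graft[of c' s'] node_count_ge_1[of c'] by simp
  qed (use 1 t' in auto)
next
  case (2 c cs s)
  obtain ts' where t': "t' = Node ts'" by (cases t')
  show ?case
  proof (cases ts')
    case Nil
    then have "s' = Node (graft c s # cs)" using 2 t' by simp
    then have "node_count s' = node_count (graft c s) + sum_list (map node_count cs) + 1"
      by simp
    then show ?thesis using 2 node_count_graft[of c s] node_count_ge_1[of c] by simp
  next
    case (Cons c' cs')
    then show ?thesis using "2.IH"[of c'] "2.prems" t' by auto
  qed
qed

lemma sum_list_node_count_eq: "sum_list (map node_count ts) = sum_list (map (\<lambda>c. node_count c - 1) ts) + length ts"
proof (induction ts)
  case (Cons a ts)
  then show ?case using node_count_ge_1[of a] by simp
qed simp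

context
  fixes p :: "nat \<Rightarrow> real"
  assumes p_nonneg: "\<And>k. 0 \<le> p k"
begin

lemma gw_prob_nonneg: "0 \<le> gw_prob p t"
  by (induction t) (auto intro!: mult_nonneg_nonneg prod_list_nonneg p_nonneg)

lemma gw_weight_nonneg: "0 \<le> x \<Longrightarrow> 0 \<le> gw_weight p x t"
  by (simp add: gw_weight_def gw_prob_nonneg)

lemma gw_size_prob_nonneg: "0 \<le> gw_size_prob p n"
  by (simp add: gw_size_prob_def sum_nonneg gw_prob_nonneg)

text \<open>The truncations satisfy \<open>G(N + 1, x) \<le> x \<Phi>(G(N, x))\<close>: a tree of size at most
  \<open>N + 1\<close> is a root with at most \<open>N\<close> subtrees of size at most \<open>N\<close>.\<close>

lemma gw_size_gf_upto_le:
  assumes x: "0 \<le> x" and t: "0 \<le> t" and summable: "summable (\<lambda>k. p k * t ^ k)"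
    and below: "x * (\<Sum>k. p k * t ^ k) \<le> t"
  shows "gw_size_gf_upto p N x \<le> t"
proof (induction N)
  case 0
  then show ?case by (simp add: gw_size_gf_upto_def gw_size_prob_0 t)
next
  case (Suc N)
  let ?U = "Node ` {ts. set ts \<subseteq> {t. node_count t \<le> N} \<and> length ts < Suc N}"
  have fin: "finite ?U"
    by (intro finite_imageI finite_subset[OF _ finite_lists_length_le[OF finite_node_count_le, of _ N]])
      auto
  have "gw_size_gf_upto p (Suc N) x \<le> (\<Sum>u\<in>?U. gw_weight p x u)"
    unfolding gw_size_gf_upto_eq_sum_trees using trees_Suc_subset_Node_lists[of N]
    by (intro sum_mono2[OF fin]) (auto simp: gw_weight_nonneg x)
  also have "\<dots> = (\<Sum>k<Suc N. p k * x * gw_size_gf_upto p N x ^ k)"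
    by (rule sum_gw_weight_Node_lists)
  also have "\<dots> \<le> (\<Sum>k<Suc N. p k * x * t ^ k)"
    using Suc x by (intro sum_mono mult_left_mono power_mono)
      (auto simp: gw_size_gf_upto_eq_sum_trees gw_weight_nonneg sum_nonneg p_nonneg)
  also have "\<dots> = x * (\<Sum>k<Suc N. p k * t ^ k)"
    by (simp add: sum_distrib_left algebra_simps)
  also have "\<dots> \<le> x * (\<Sum>k. p k * t ^ k)"
    by (intro mult_left_mono sum_le_suminf summable x) (auto simp: p_nonneg t)
  finally show ?case using below by linarith
qed

lemma gw_size_gf_fixpoint_ineq:
  assumes x: "0 < x" and summable: "summable (\<lambda>n. gw_size_prob p n * x ^ n)"
  defines "z \<equiv> (\<Sum>n. gw_size_prob p n * x ^ n)"
  shows "summable (\<lambda>k. p k * z ^ k) \<and> x * (\<Sum>k. p k * z ^ k) \<le> z"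
proof -
  have upto_le: "gw_size_gf_upto p M x \<le> z" for M
    unfolding gw_size_gf_upto_def z_def atMost_atLeast0
    using sum_le_suminf[OF summable, of "{0..M}"] x by (simp add: gw_size_prob_nonneg)
  have z_nonneg: "0 \<le> z"
    unfolding z_def using x by (intro suminf_nonneg summable) (simp add: gw_size_prob_nonneg)
  have partial: "x * (\<Sum>k<K. p k * gw_size_gf_upto p N x ^ k) \<le> z" for N K
  proof -
    let ?U = "Node ` {ts. set ts \<subseteq> {t. node_count t \<le> N} \<and> length ts < K}"
    have "sum_list (map node_count ts) \<le> length ts * N"
      if "set ts \<subseteq> {t. node_count t \<le> N}" for ts
      using that by (induction ts) auto
    then have sub: "?U \<subseteq> {t. node_count t \<le> 1 + K * N}"
      by (force intro: order_trans[OF _ mult_le_mono1[of _ K N]])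
    have "x * (\<Sum>k<K. p k * gw_size_gf_upto p N x ^ k) = (\<Sum>u\<in>?U. gw_weight p x u)"
      by (simp add: sum_gw_weight_Node_lists sum_distrib_left algebra_simps)
    also have "\<dots> \<le> gw_size_gf_upto p (1 + K * N) x"
      unfolding gw_size_gf_upto_eq_sum_trees using x
      by (intro sum_mono2[OF finite_node_count_le sub]) (simp add: gw_weight_nonneg)
    finally show ?thesis using upto_le[of "1 + K * N"] by linarith
  qed
  have "(\<lambda>N. gw_size_gf_upto p N x) \<longlonglongrightarrow> z"
    unfolding gw_size_gf_upto_def z_def lessThan_Suc_atMost[symmetric]
    using LIMSEQ_Suc[OF summable_LIMSEQ[OF summable]] by simp
  then have "(\<lambda>N. x * (\<Sum>k<K. p k * gw_size_gf_upto p N x ^ k)) \<longlonglongrightarrow> x * (\<Sum>k<K. p k * z ^ k)"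
    for K by (intro tendsto_intros)
  then have "x * (\<Sum>k<K. p k * z ^ k) \<le> z" for K
    by (rule LIMSEQ_le_const2) (use partial in auto)
  then have bounded: "(\<Sum>k<K. p k * z ^ k) \<le> z / x" for K
    using x by (simp add: field_simps mult.commute)
  have "summable (\<lambda>k. p k * z ^ k)"
    by (rule summableI_nonneg_bounded[OF _ bounded]) (simp add: p_nonneg z_nonneg)
  moreover from this have "(\<Sum>k. p k * z ^ k) \<le> z / x" by (rule suminf_le_const[OF _ bounded])
  ultimately show ?thesis using x by (simp add: field_simps mult.commute)
qed

lemma gw_size_prob_supermult:
  assumes "1 \<le> n" "1 \<le> m"
  shows "gw_size_prob p n * gw_size_prob p m \<le> p 0 * gw_size_prob p (n + m - 1)"
proof -
  define C where "C k = {t. node_count t = k}" for k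
  define g where "g x = graft (fst x) (snd x)" for x
  have inj: "inj_on g (C n \<times> C m)"
  proof (rule inj_onI)
    fix x y assume "x \<in> C n \<times> C m" "y \<in> C n \<times> C m" "g x = g y"
    then have "fst x = fst y \<and> snd x = snd y"
      using graft_inj[of "fst x" "snd x" "fst y" "snd y"] by (simp add: C_def g_def mem_Times_iff)
    then show "x = y" by (simp add: prod_eq_iff)
  qed
  have sub: "g ` (C n \<times> C m) \<subseteq> C (n + m - 1)"
    using assms by (auto simp: node_count_graft C_def g_def)
  have "gw_size_prob p n * gw_size_prob p m = (\<Sum>t\<in>C n. \<Sum>s\<in>C m. gw_prob p t * gw_prob p s)"
    unfolding gw_size_prob_def C_def by (rule sum_product)
  also have "\<dots> = (\<Sum>x\<in>C n \<times> C m. gw_prob p (fst x) * gw_prob p (snd x))"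
    by (subst sum.cartesian_product) (simp add: case_prod_beta)
  also have "\<dots> = (\<Sum>x\<in>C n \<times> C m. p 0 * gw_prob p (g x))"
    by (intro sum.cong refl) (simp add: g_def gw_prob_graft[symmetric] mult.commute)
  also have "\<dots> = p 0 * (\<Sum>u\<in>g ` (C n \<times> C m). gw_prob p u)"
    by (simp add: sum.reindex[OF inj] sum_distrib_left)
  also have "\<dots> \<le> p 0 * (\<Sum>u\<in>C (n + m - 1). gw_prob p u)"
    by (intro mult_left_mono sum_mono2 sub gw_prob_nonneg p_nonneg) (simp add: C_def finite_node_count_eq)
  finally show ?thesis unfolding gw_size_prob_def C_def .
qed

lemma gw_size_prob_star_ge: "p k * p 0 ^ k \<le> gw_size_prob p (k + 1)"
proof -
  let ?t = "Node (replicate k (Node []))"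
  have "gw_prob p ?t \<le> gw_size_prob p (k + 1)"
    unfolding gw_size_prob_def
    by (rule member_le_sum) (auto simp: sum_list_replicate finite_node_count_eq gw_prob_nonneg)
  then show ?thesis by (simp add: prod_list_replicate)
qed

lemma gw_prob_pos_span_dvd: "0 < gw_prob p t \<Longrightarrow> gw_span p dvd node_count t - 1"
proof (induction t)
  case (Node ts)
  have "p (length ts) \<noteq> 0" and prod: "prod_list (map (gw_prob p) ts) \<noteq> 0"
    using Node.prems by auto
  then have p_pos: "0 < p (length ts)" using p_nonneg[of "length ts"] by simp
  have children_pos: "0 < gw_prob p c" if "c \<in> set ts" for c
    using prod that gw_prob_nonneg
    by (metis image_eqI order_le_less prod_list_zero_iff set_map)
  from p_pos have "gw_span p dvd length ts" unfolding gw_span_def by (intro Gcd_dvd) simp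
  moreover have "gw_span p dvd sum_list (map (\<lambda>c. node_count c - 1) ts)"
    using Node.IH children_pos by (induction ts) auto
  ultimately show ?case by (simp add: sum_list_node_count_eq)
qed

lemma gw_size_prob_pos_span_dvd: "0 < gw_size_prob p n \<Longrightarrow> gw_span p dvd n - 1"
proof -
  assume "0 < gw_size_prob p n"
  then obtain t where "node_count t = n" "gw_prob p t \<noteq> 0"
    unfolding gw_size_prob_def by (metis (mono_tags) mem_Collect_eq sum.neutral less_irrefl)
  then show ?thesis using gw_prob_pos_span_dvd[of t] gw_prob_nonneg[of t] by auto
qed
end

section \<open>Additive submonoids of the naturals\<close>

lemma add_submonoid_mult_mem:
  fixes M :: "nat set"
  assumes "0 \<in> M" and add: "\<And>a b. a \<in> M \<Longrightarrow> b \<in> M \<Longrightarrow> a + b \<in> M" and "a \<in> M"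
  shows "j * a \<in> M"
  by (induction j) (auto simp: assms)

text \<open>The least
  positive difference must divide every element, since \<open>bezout_nat\<close> would otherwise
  produce a smaller one.\<close>

lemma add_submonoid_Gcd_difference:
  fixes M :: "nat set"
  assumes "0 \<in> M" and add: "\<And>a b. a \<in> M \<Longrightarrow> b \<in> M \<Longrightarrow> a + b \<in> M"
    and "a \<in> M" "a \<noteq> 0"
  obtains A B where "A \<in> M" "B \<in> M" "A = B + Gcd M"
proof -
  define D where "D = {d. 0 < d \<and> (\<exists>A\<in>M. \<exists>B\<in>M. A = B + d)}"
  have "a \<in> D" unfolding D_def using assms by force
  define g where "g = (LEAST d. d \<in> D)"
  have "g \<in> D" unfolding g_def by (rule LeastI) fact
  then obtain A B where AB: "A \<in> M" "B \<in> M" "A = B + g" and g0: "0 < g"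
    unfolding D_def by blast
  have mult: "c \<in> M \<Longrightarrow> j * c \<in> M" for c j
    using add_submonoid_mult_mem[OF \<open>0 \<in> M\<close> add] by blast
  have "g dvd s" if "s \<in> M" for s
  proof -
    obtain x y where xy: "g * x = s * y + gcd g s" using bezout_nat g0 by blast
    have "x * A = (x * B + y * s) + gcd g s"
      using xy AB(3) by (simp add: algebra_simps)
    moreover have "x * A \<in> M" "x * B + y * s \<in> M" using AB that mult add by auto
    moreover have "0 < gcd g s" using g0 by simp
    ultimately have "gcd g s \<in> D" unfolding D_def by blast
    then have "g \<le> gcd g s" unfolding g_def by (rule Least_le)
    then have "gcd g s = g" using gcd_le1_nat[of g s] g0 by linarith
    then show ?thesis by (metis gcd_dvd2)
  qed
  then have "g dvd Gcd M" by (rule Gcd_greatest)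
  moreover have "Gcd M dvd g"
    using AB Gcd_dvd[of A M] Gcd_dvd[of B M] by (metis dvd_add_right_iff)
  ultimately have "g = Gcd M" by (rule dvd_antisym)
  then show thesis using that AB by blast
qed

text \<open>Write \<open>j = q b + r\<close> with \<open>r < b \<le> q\<close>; then \<open>j d = (q - r) (b d) + r ((b + 1) d)\<close>.\<close>

lemma add_submonoid_consecutive_multiples:
  fixes M :: "nat set"
  assumes "0 \<in> M" and add: "\<And>a b. a \<in> M \<Longrightarrow> b \<in> M \<Longrightarrow> a + b \<in> M"
    and B: "b * d \<in> M" and A: "(b + 1) * d \<in> M" and j: "b * b \<le> j"
  shows "j * d \<in> M"
proof -
  have mult: "c \<in> M \<Longrightarrow> k * c \<in> M" for c k
    using add_submonoid_mult_mem[OF \<open>0 \<in> M\<close> add] by blast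
  show ?thesis
  proof (cases "b = 0")
    case True
    then show ?thesis using A mult[of d j] by simp
  next
    case False
    define q r where "q = j div b" and "r = j mod b"
    have "b \<le> q" unfolding q_def using j False
      by (metis div_le_mono nonzero_mult_div_cancel_right)
    have "r < b" using False by (simp add: r_def)
    have "(q - r) * (b * d) + r * ((b + 1) * d) = (q - r + r) * b * d + r * d"
      by (simp add: algebra_simps)
    also have "\<dots> = (q * b + r) * d" using \<open>b \<le> q\<close> \<open>r < b\<close> by (simp add: algebra_simps)
    also have "q * b + r = j" by (simp add: q_def r_def)
    finally show ?thesis using add[OF mult[OF B, of "q - r"] mult[OF A, of r]] by simp
  qed
qed

lemma add_submonoid_contains_large_multiples:
  fixes M :: "nat set"
  assumes "0 \<in> M" and add: "\<And>a b. a \<in> M \<Longrightarrow> b \<in> M \<Longrightarrow> a + b \<in> M"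
    and "a \<in> M" "a \<noteq> 0"
  shows "\<exists>N. \<forall>s\<ge>N. Gcd M dvd s \<longrightarrow> s \<in> M"
proof -
  define d where "d = Gcd M"
  obtain A B where AB: "A \<in> M" "B \<in> M" "A = B + d"
    using add_submonoid_Gcd_difference[OF assms] unfolding d_def by blast
  obtain b where b: "B = b * d" using Gcd_dvd[OF AB(2)] unfolding d_def by (metis dvdE mult.commute)
  have "s \<in> M" if "b * b * d \<le> s" "d dvd s" for s
  proof (cases "d = 0")
    case True
    then show ?thesis using that \<open>0 \<in> M\<close> by simp
  next
    case False
    obtain j where "s = j * d" using \<open>d dvd s\<close> by (metis dvdE mult.commute)
    moreover have "(b + 1) * d \<in> M" using AB b by (simp add: algebra_simps)
    ultimately show ?thesis
      using add_submonoid_consecutive_multiples[OF \<open>0 \<in> M\<close> add] AB b that False by simp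
  qed
  then show ?thesis unfolding d_def by blast
qed

section \<open>Supermultiplicative sequences\<close>

lemma obtain_progression_window:
  fixes N n q d :: nat
  assumes "N \<le> n" "d dvd n" "0 < q" "d dvd q"
  obtains s i where "N \<le> s" "s < N + q" "d dvd s" "n = s + i * q"
proof
  define i where "i = (n - N) div q"
  have "i * q + (n - N) mod q = n - N" unfolding i_def by (rule div_mult_mod_eq)
  then show "N \<le> n - i * q" "n - i * q < N + q" "n = n - i * q + i * q"
    using mod_less_divisor[OF assms(3), of "n - N"] assms(1) by linarith+
  show "d dvd n - i * q" using assms(2,4) by (simp add: dvd_diff_nat)
qed

lemma mult_ge_shift_abs:
  fixes c x y a :: real
  assumes "x - a \<le> y" "y \<le> x"
  shows "c * x - a * \<bar>c\<bar> \<le> c * y"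
proof (cases "0 \<le> c")
  case True
  with assms(1) have "c * (x - a) \<le> c * y" by (rule mult_left_mono)
  then show ?thesis using True by (simp add: algebra_simps)
next
  case False
  then have "c * x \<le> c * y" using assms(2) by (simp add: mult_left_mono_neg)
  moreover have "0 \<le> a * \<bar>c\<bar>" using assms by simp
  ultimately show ?thesis by linarith
qed

context
  fixes f :: "nat \<Rightarrow> real"
  assumes nonneg: "\<And>n. 0 \<le> f n" and supermult: "\<And>m n. f m * f n \<le> f (m + n)"
begin

lemma supermult_power_le: "f s * f q ^ i \<le> f (s + i * q)"
proof (induction i)
  case (Suc i)
  have "f s * f q ^ Suc i = (f s * f q ^ i) * f q" by simp
  also have "\<dots> \<le> f (s + i * q) * f q" using Suc nonneg by (rule mult_right_mono)
  also have "\<dots> \<le> f (s + Suc i * q)" using supermult[of "s + i * q" q] by (simp add: algebra_simps)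
  finally show ?case .
qed simp

text \<open>Every \<open>n\<close> in the progression is \<open>s + i q\<close> with \<open>s\<close> from a fixed finite window,
  so \<open>f n \<ge> (min\<^sub>s f s) f(q)\<^sup>i\<close>.\<close>

lemma supermult_linear_lower_bound:
  assumes pos: "\<And>s. N \<le> s \<Longrightarrow> d dvd s \<Longrightarrow> 0 < f s"
    and q: "0 < q" "d dvd q" "0 < f q"
  defines "c \<equiv> ln (f q) / q"
  shows "\<exists>B. \<forall>n\<ge>N. d dvd n \<longrightarrow> c * real n + B \<le> ln (f n)"
proof -
  define W where "W = {s. N \<le> s \<and> s < N + q \<and> d dvd s}"
  have "finite W" unfolding W_def by (rule finite_subset[of _ "{..<N + q}"]) auto
  define \<beta> where "\<beta> = Min (f ` W)"
  define B where "B = ln \<beta> - (real N + real q) * \<bar>c\<bar>"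
  have "c * real n + B \<le> ln (f n)" if n: "N \<le> n" "d dvd n" for n
  proof -
    obtain s i where s: "N \<le> s" "s < N + q" "d dvd s" and n_eq: "n = s + i * q"
      using obtain_progression_window[OF n q(1,2)] .
    then have "s \<in> W" unfolding W_def by simp
    have "\<forall>s\<in>W. 0 < f s" using pos by (simp add: W_def)
    moreover have fin: "finite (f ` W)" "f ` W \<noteq> {}" using \<open>finite W\<close> \<open>s \<in> W\<close> by auto
    ultimately have \<beta>: "0 < \<beta>" "\<beta> \<le> f s"
      unfolding \<beta>_def using Min_gr_iff[OF fin] Min_le[OF fin(1)] \<open>s \<in> W\<close> by auto
    have "\<beta> * f q ^ i \<le> f s * f q ^ i" using \<beta>(2) q(3) by (simp add: mult_right_mono)
    also have "\<dots> \<le> f n" using supermult_power_le[of s q i] n_eq by simp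
    finally have "ln (\<beta> * f q ^ i) \<le> ln (f n)" using \<beta> q by (intro ln_mono) simp_all
    moreover have "ln (\<beta> * f q ^ i) = ln \<beta> + c * (i * q)"
      using \<beta> q by (simp add: c_def ln_mult ln_realpow)
    moreover have "c * n - (real N + real q) * \<bar>c\<bar> \<le> c * (i * q)"
      using s n_eq by (intro mult_ge_shift_abs) simp_all
    ultimately show ?thesis unfolding B_def by simp
  qed
  then show ?thesis by blast
qed

end

lemma tendsto_div_of_linear_bounds:
  fixes g :: "nat \<Rightarrow> real" and L :: real
  assumes F: "F \<le> sequentially"
    and lower: "\<And>c. c < L \<Longrightarrow> \<exists>B. eventually (\<lambda>n. c * real n + B \<le> g n) F"
    and upper: "eventually (\<lambda>n. g n \<le> L * real n + B') F"
  shows "((\<lambda>n. g n / real n) \<longlongrightarrow> L) F"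
proof (rule tendstoI)
  fix e :: real assume e: "0 < e"
  obtain B where B: "eventually (\<lambda>n. (L - e / 2) * real n + B \<le> g n) F"
    using lower[of "L - e / 2"] e by auto
  obtain n0 :: nat where n0: "2 * (\<bar>B\<bar> + \<bar>B'\<bar>) / e < n0" using reals_Archimedean2 by blast
  have "eventually (\<lambda>n. n0 \<le> n) F" by (rule filter_leD[OF F]) (simp add: eventually_ge_at_top)
  with B upper show "eventually (\<lambda>n. dist (g n / real n) L < e) F"
  proof eventually_elim
    case (elim n)
    then have n: "n0 \<le> n" and lo: "(L - e / 2) * real n + B \<le> g n"
      and up: "g n \<le> L * real n + B'" by auto
    have "2 * (\<bar>B\<bar> + \<bar>B'\<bar>) < e * n0" using n0 e by (simp add: field_simps)
    moreover have "e * n0 \<le> e * n" using n e by simp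
    ultimately have "2 * (\<bar>B\<bar> + \<bar>B'\<bar>) < e * n" by linarith
    moreover have "- B \<le> \<bar>B\<bar>" "B' \<le> \<bar>B'\<bar>" "0 \<le> \<bar>B\<bar>" "0 \<le> \<bar>B'\<bar>" by simp_all
    ultimately have "\<bar>g n - L * n\<bar> < e * n" using lo up unfolding abs_less_iff by argo
    moreover have "0 < real n"
      using n0 n divide_nonneg_pos[OF _ e, of "2 * (\<bar>B\<bar> + \<bar>B'\<bar>)"] by simp
    ultimately show "dist (g n / real n) L < e"
      by (simp add: dist_real_def field_simps abs_divide)
  qed
qed

section \<open>Power inequalities and limits of monotone functions\<close>

lemma Bernoulli_inequality_strict:
  fixes x :: "'a :: linordered_field"
  assumes "-1 \<le> x" "x \<noteq> 0" "2 \<le> n"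
  shows "1 + of_nat n * x < (1 + x) ^ n"
proof -
  obtain m where n: "n = Suc m" "1 \<le> m" using assms(3) by (cases n) auto
  have "0 < of_nat m * x\<^sup>2" using n assms(2) by simp
  then have "1 + of_nat n * x < (1 + x) * (1 + of_nat m * x)"
    using n by (simp add: algebra_simps power2_eq_square)
  also have "\<dots> \<le> (1 + x) ^ n"
    using Bernoulli_inequality[OF assms(1), of m] assms(1) n by (simp add: mult_left_mono)
  finally show ?thesis .
qed

text \<open>Bernoulli's inequality at \<open>x = t/\<tau> - 1\<close>, multiplied by \<open>\<tau>\<^sup>k\<^sup>+\<^sup>1\<close>, is the tangent
  inequality for \<open>t\<^sup>k\<close> at \<open>\<tau>\<close>.\<close>

lemma power_tangent_rescaled:
  fixes t \<tau> :: real
  assumes "0 < \<tau>"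
  shows "\<tau> ^ (k + 1) * (1 + real k * (t / \<tau> - 1)) = real k * \<tau> ^ k * t - (real k - 1) * \<tau> ^ (k + 1)"
    and "\<tau> ^ (k + 1) * (1 + (t / \<tau> - 1)) ^ k = \<tau> * t ^ k"
  using assms by (simp_all add: field_simps power_divide)

lemma power_above_tangent:
  fixes t \<tau> :: real
  assumes "0 \<le> t" "0 < \<tau>"
  shows "real k * \<tau> ^ k * t \<le> \<tau> * t ^ k + (real k - 1) * \<tau> ^ (k + 1)"
proof -
  have "1 + real k * (t / \<tau> - 1) \<le> (1 + (t / \<tau> - 1)) ^ k"
    using assms by (intro Bernoulli_inequality) simp
  then have "\<tau> ^ (k + 1) * (1 + real k * (t / \<tau> - 1)) \<le> \<tau> ^ (k + 1) * (1 + (t / \<tau> - 1)) ^ k"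
    using assms by (intro mult_left_mono) simp_all
  then show ?thesis unfolding power_tangent_rescaled[OF assms(2)] by simp
qed

lemma power_strictly_above_tangent:
  fixes t \<tau> :: real
  assumes "0 \<le> t" "0 < \<tau>" "2 \<le> k" "t \<noteq> \<tau>"
  shows "real k * \<tau> ^ k * t < \<tau> * t ^ k + (real k - 1) * \<tau> ^ (k + 1)"
proof -
  have "1 + real k * (t / \<tau> - 1) < (1 + (t / \<tau> - 1)) ^ k"
    using assms by (intro Bernoulli_inequality_strict) (simp_all add: field_simps)
  then have "\<tau> ^ (k + 1) * (1 + real k * (t / \<tau> - 1)) < \<tau> ^ (k + 1) * (1 + (t / \<tau> - 1)) ^ k"
    using assms by (intro mult_strict_left_mono) simp_all
  then show ?thesis unfolding power_tangent_rescaled[OF assms(2)] by simp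
qed

lemma power_cross_diff_nonneg:
  fixes s t :: real
  assumes s: "0 \<le> s" and st: "s \<le> t"
  shows "0 \<le> (real k - real j) * (t ^ k * s ^ j - s ^ k * t ^ j)"
proof (cases "j \<le> k")
  case True
  then obtain d where d: "k = j + d" using le_Suc_ex by blast
  have "t ^ k * s ^ j - s ^ k * t ^ j = (t * s) ^ j * (t ^ d - s ^ d)"
    by (simp add: d power_add algebra_simps power_mult_distrib)
  moreover have "s ^ d \<le> t ^ d" using s st by (intro power_mono) auto
  ultimately have "0 \<le> t ^ k * s ^ j - s ^ k * t ^ j" using s st by simp
  then show ?thesis using True by simp
next
  case False
  then obtain d where d: "j = k + d" using le_Suc_ex[of k j] by auto
  have "t ^ k * s ^ j - s ^ k * t ^ j = - ((t * s) ^ k * (t ^ d - s ^ d))"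
    by (simp add: d power_add algebra_simps power_mult_distrib)
  moreover have "s ^ d \<le> t ^ d" using s st by (intro power_mono) auto
  ultimately have "t ^ k * s ^ j - s ^ k * t ^ j \<le> 0" using s st by simp
  moreover have "real k - real j \<le> 0" using False by simp
  ultimately show ?thesis by (simp add: mult_nonpos_nonpos)
qed

text \<open>Chebyshev's sum inequality for the weights \<open>a\<^sub>k s\<^sup>k\<close> and \<open>a\<^sub>k t\<^sup>k\<close>, obtained by
  symmetrising the double sum: this is why \<open>t \<Phi>'(t) / \<Phi>(t)\<close> is increasing.\<close>

lemma sum_index_weighted_powers_cross_le:
  fixes a :: "nat \<Rightarrow> real" and s t :: real
  assumes a: "\<And>k. 0 \<le> a k" and s: "0 \<le> s" and st: "s \<le> t"
  shows "(\<Sum>k<N. real k * a k * s ^ k) * (\<Sum>j<N. a j * t ^ j)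
    \<le> (\<Sum>k<N. real k * a k * t ^ k) * (\<Sum>j<N. a j * s ^ j)"
proof -
  define w where "w k j = a k * a j * (t ^ k * s ^ j - s ^ k * t ^ j)" for k j
  define X where "X = (\<Sum>k<N. \<Sum>j<N. real k * w k j)"
  have diff: "(\<Sum>k<N. real k * a k * t ^ k) * (\<Sum>j<N. a j * s ^ j)
      - (\<Sum>k<N. real k * a k * s ^ k) * (\<Sum>j<N. a j * t ^ j) = X"
    unfolding X_def w_def sum_product sum_subtractf[symmetric]
    by (intro sum.cong refl) (simp add: algebra_simps)
  have "X = (\<Sum>j<N. \<Sum>k<N. real k * w k j)" unfolding X_def by (rule sum.swap)
  also have "\<dots> = (\<Sum>k<N. \<Sum>j<N. - (real j * w k j))"
    by (intro sum.cong refl) (simp add: w_def algebra_simps)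
  also have "\<dots> = - (\<Sum>k<N. \<Sum>j<N. real j * w k j)" by (simp add: sum_negf)
  finally have X2: "2 * X = (\<Sum>k<N. \<Sum>j<N. (real k - real j) * w k j)"
    unfolding X_def by (simp add: algebra_simps sum.distrib sum_subtractf)
  have "0 \<le> (\<Sum>k<N. \<Sum>j<N. (real k - real j) * w k j)"
  proof (intro sum_nonneg)
    fix k j
    have "0 \<le> a k * a j * ((real k - real j) * (t ^ k * s ^ j - s ^ k * t ^ j))"
      using power_cross_diff_nonneg[OF s st, of k j] a by simp
    then show "0 \<le> (real k - real j) * w k j" by (simp add: w_def algebra_simps)
  qed
  then show ?thesis using diff X2 by simp
qed

lemma mono_tendsto_SUP_at_top:
  fixes f :: "real \<Rightarrow> 'a :: {complete_linorder, linorder_topology}"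
  assumes mono: "\<And>s t. a \<le> s \<Longrightarrow> s \<le> t \<Longrightarrow> f s \<le> f t"
  shows "(f \<longlongrightarrow> (SUP t\<in>{a..}. f t)) at_top"
proof (rule order_tendstoI)
  fix y assume "y < (SUP t\<in>{a..}. f t)"
  then obtain t where t: "a \<le> t" "y < f t" by (auto simp: less_SUP_iff)
  show "\<forall>\<^sub>F x in at_top. y < f x"
    by (rule eventually_at_top_linorderI[of t]) (use t mono in \<open>fastforce intro: less_le_trans\<close>)
next
  fix y assume y: "(SUP t\<in>{a..}. f t) < y"
  show "\<forall>\<^sub>F x in at_top. f x < y"
  proof (rule eventually_at_top_linorderI[of a])
    fix x assume "a \<le> x"
    then have "f x \<le> (SUP t\<in>{a..}. f t)" by (intro SUP_upper) auto
    then show "f x < y" using y by simp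
  qed
qed

lemma mono_tendsto_SUP_at_left:
  fixes f :: "real \<Rightarrow> 'a :: {complete_linorder, linorder_topology}"
  assumes ab: "a < b" and mono: "\<And>s t. a \<le> s \<Longrightarrow> s \<le> t \<Longrightarrow> t < b \<Longrightarrow> f s \<le> f t"
  shows "(f \<longlongrightarrow> (SUP t\<in>{a..<b}. f t)) (at_left b)"
proof (rule order_tendstoI)
  fix y assume "y < (SUP t\<in>{a..<b}. f t)"
  then obtain t where t: "a \<le> t" "t < b" "y < f t" by (auto simp: less_SUP_iff)
  have ev: "\<forall>\<^sub>F x in at_left b. x \<in> {t<..<b}" by (rule eventually_at_left_real[OF t(2)])
  show "\<forall>\<^sub>F x in at_left b. y < f x"
    by (rule eventually_mono[OF ev]) (use t mono in \<open>fastforce intro: less_le_trans\<close>)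
next
  fix y assume y: "(SUP t\<in>{a..<b}. f t) < y"
  have ev: "\<forall>\<^sub>F x in at_left b. x \<in> {a<..<b}" by (rule eventually_at_left_real[OF ab])
  show "\<forall>\<^sub>F x in at_left b. f x < y"
  proof (rule eventually_mono[OF ev])
    fix x assume "x \<in> {a<..<b}"
    then have "f x \<le> (SUP t\<in>{a..<b}. f t)" by (intro SUP_upper) auto
    then show "f x < y" using y by simp
  qed
qed

lemma nonsummable_partial_sums_unbounded:
  fixes c :: "nat \<Rightarrow> real"
  assumes nonneg: "\<And>k. 1 \<le> k \<Longrightarrow> 0 \<le> c k" and "\<not> summable c"
  shows "\<exists>N. M < (\<Sum>k<N. c k)"
proof (rule ccontr)
  assume "\<not> ?thesis"
  then have bounded: "(\<Sum>k<N. c k) \<le> M" for N by (simp add: not_less)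
  have "summable (\<lambda>k. c (Suc k))"
  proof (rule summableI_nonneg_bounded)
    show "0 \<le> c (Suc n)" for n using nonneg by simp
    show "(\<Sum>k<n. c (Suc k)) \<le> M - c 0" for n
      using bounded[of "Suc n"] sum.lessThan_Suc_shift[of c n] by linarith
  qed
  then show False using \<open>\<not> summable c\<close> summable_Suc_iff by blast
qed

section \<open>The offspring generating function\<close>

locale gw_offspring =
  fixes p :: "nat \<Rightarrow> real"
  assumes dist: "offspring_dist p" and p0: "0 < p 0" and pbig: "\<exists>k>1. 0 < p k"
begin

lemma p_nonneg: "0 \<le> p k"
  using dist by (simp add: offspring_dist_def)

lemma series_terms_nonneg [simp]:
  "0 \<le> t \<Longrightarrow> 0 \<le> p k * t ^ k"
  "0 \<le> t \<Longrightarrow> 0 \<le> real k * p k * t ^ k"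
  "0 \<le> t \<Longrightarrow> 0 \<le> real k * p k * t ^ (k - 1)"
  by (simp_all add: p_nonneg)

lemma obtain_big_offspring:
  obtains K where "2 \<le> K" "0 < p K"
  using pbig by (metis Suc_1 Suc_leI)

abbreviation rho :: ereal where "rho \<equiv> conv_radius p"

text \<open>Real-valued versions of \<open>\<Phi>(t)\<close> and \<open>t \<Phi>'(t)\<close> for \<open>0 \<le> t\<close>; their difference
  \<open>excess t\<close> has the sign of \<open>\<Psi>(t) - 1\<close>.\<close>

definition Phi_summable :: "real \<Rightarrow> bool" where
  "Phi_summable t \<longleftrightarrow> summable (\<lambda>k. p k * t ^ k)"

definition tdPhi_summable :: "real \<Rightarrow> bool" where
  "tdPhi_summable t \<longleftrightarrow> summable (\<lambda>k. real k * p k * t ^ k)"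

definition Phi :: "real \<Rightarrow> real" where
  "Phi t = (\<Sum>k. p k * t ^ k)"

definition tdPhi :: "real \<Rightarrow> real" where
  "tdPhi t = (\<Sum>k. real k * p k * t ^ k)"

definition excess :: "real \<Rightarrow> real" where
  "excess t = tdPhi t - Phi t"

lemma Phi_summable_imp_le_rho: "Phi_summable t \<Longrightarrow> ereal \<bar>t\<bar> \<le> rho"
  unfolding Phi_summable_def using conv_radius_geI[of p t] by simp

lemma Phi_summable_below_rho: "ereal \<bar>t\<bar> < rho \<Longrightarrow> Phi_summable t"
  unfolding Phi_summable_def using summable_in_conv_radius[of t p] by simp

lemma Phi_summable_1: "Phi_summable 1"
  using dist unfolding offspring_dist_def Phi_summable_def by (auto intro: sums_summable)

lemma Phi_1: "Phi 1 = 1"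
  using dist unfolding offspring_dist_def Phi_def by (simp add: sums_iff)

lemma one_le_rho: "1 \<le> rho"
  using Phi_summable_imp_le_rho[OF Phi_summable_1] by (simp add: one_ereal_def)

lemma rho_finite_cases:
  obtains "rho = \<infinity>" | r where "rho = ereal r" "1 \<le> r"
  using one_le_rho by (cases rho) auto

lemma Phi_summable_mono: "Phi_summable t \<Longrightarrow> 0 \<le> s \<Longrightarrow> s \<le> t \<Longrightarrow> Phi_summable s"
  unfolding Phi_summable_def
proof (rule summable_comparison_test'[of _ 0])
  fix n assume "0 \<le> s" "s \<le> t"
  then have "s ^ n \<le> t ^ n" by (intro power_mono) auto
  then show "norm (p n * s ^ n) \<le> p n * t ^ n"
    using \<open>0 \<le> s\<close> by (simp add: abs_mult p_nonneg mult_left_mono)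
qed

lemma tdPhi_summable_mono: "tdPhi_summable t \<Longrightarrow> 0 \<le> s \<Longrightarrow> s \<le> t \<Longrightarrow> tdPhi_summable s"
  unfolding tdPhi_summable_def
proof (rule summable_comparison_test'[of _ 0])
  fix n assume "0 \<le> s" "s \<le> t"
  then have "s ^ n \<le> t ^ n" by (intro power_mono) auto
  then show "norm (real n * p n * s ^ n) \<le> real n * p n * t ^ n"
    using \<open>0 \<le> s\<close> by (simp add: abs_mult p_nonneg mult_left_mono)
qed

lemma tdPhi_summable_below_rho:
  assumes t: "0 \<le> t" "ereal t < rho"
  shows "tdPhi_summable t"
proof -
  obtain K where K: "ereal t < ereal K" "ereal K < rho" using ereal_dense2[OF t(2)] by blast
  have "summable (\<lambda>n. diffs p n * t ^ n)"
  proof (rule termdiff_converges[of t K])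
    show "norm t < K" using t K by simp
    show "summable (\<lambda>n. p n * x ^ n)" if "norm x < K" for x
      using Phi_summable_below_rho[of x] that K(2) unfolding Phi_summable_def
      by (simp add: order.strict_trans[of "ereal \<bar>x\<bar>" "ereal K"])
  qed
  then have "summable (\<lambda>n. t * (diffs p n * t ^ n))" by (rule summable_mult)
  then have "summable (\<lambda>n. real (Suc n) * p (Suc n) * t ^ Suc n)"
    by (simp add: diffs_def algebra_simps)
  then show ?thesis unfolding tdPhi_summable_def by (subst summable_Suc_iff[symmetric]) simp
qed

lemma summable_below_rho:
  assumes "0 \<le> t" "ereal t < rho"
  shows "Phi_summable t" "tdPhi_summable t"
  using assms Phi_summable_below_rho[of t] tdPhi_summable_below_rho[of t] by simp_all

lemma Phi_sums: "Phi_summable t \<Longrightarrow> (\<lambda>k. p k * t ^ k) sums Phi t"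
  unfolding Phi_summable_def Phi_def by (rule summable_sums)

lemma tdPhi_sums: "tdPhi_summable t \<Longrightarrow> (\<lambda>k. real k * p k * t ^ k) sums tdPhi t"
  unfolding tdPhi_summable_def tdPhi_def by (rule summable_sums)

lemma excess_sums:
  "Phi_summable t \<Longrightarrow> tdPhi_summable t \<Longrightarrow> (\<lambda>k. (real k - 1) * p k * t ^ k) sums excess t"
  unfolding excess_def using sums_diff[OF tdPhi_sums Phi_sums] by (simp add: algebra_simps)

lemma Phi_pos: "Phi_summable t \<Longrightarrow> 0 \<le> t \<Longrightarrow> 0 < Phi t"
  unfolding Phi_def Phi_summable_def
  using sum_le_suminf[of "\<lambda>k. p k * t ^ k" "{0}"] p0 by simp

lemma tdPhi_nonneg: "0 \<le> t \<Longrightarrow> tdPhi_summable t \<Longrightarrow> 0 \<le> tdPhi t"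
  unfolding tdPhi_def tdPhi_summable_def by (intro suminf_nonneg) auto

lemma excess_0: "excess 0 = - p 0"
  unfolding excess_def Phi_def tdPhi_def
  using powser_zero[of p] powser_zero[of "\<lambda>k. real k * p k"] by simp

lemma PhiE_eq: "0 \<le> t \<Longrightarrow> PhiE p t = (if Phi_summable t then ereal (Phi t) else \<infinity>)"
  unfolding PhiE_def Phi_def Phi_summable_def
  using summable_ereal[of "\<lambda>k. p k * t ^ k"] suminf_ereal'[of "\<lambda>k. p k * t ^ k"]
  by auto

lemma times_dPhiE_eq:
  assumes t: "0 < t"
  shows "ereal t * dPhiE p t = (if tdPhi_summable t then ereal (tdPhi t) else \<infinity>)"
proof -
  have tm: "t * (real k * p k * t ^ (k - 1)) = real k * p k * t ^ k" for k
    by (cases k) auto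
  have iff: "summable (\<lambda>k. real k * p k * t ^ (k - 1)) \<longleftrightarrow> tdPhi_summable t"
    unfolding tdPhi_summable_def tm[symmetric] using t by (simp add: summable_cmult_iff)
  show ?thesis
  proof (cases "tdPhi_summable t")
    case True
    then have s: "summable (\<lambda>k. real k * p k * t ^ (k - 1))" using iff by simp
    have "ereal t * dPhiE p t = ereal (t * (\<Sum>k. real k * p k * t ^ (k - 1)))"
      unfolding dPhiE_def by (subst suminf_ereal'[OF s]) simp
    also have "\<dots> = ereal (tdPhi t)"
      unfolding tdPhi_def tm[symmetric] by (subst suminf_mult[OF s]) simp
    finally show ?thesis using True by simp
  next
    case False
    then have "dPhiE p t = \<infinity>"
      using iff summable_ereal[of "\<lambda>k. real k * p k * t ^ (k - 1)"]
        series_terms_nonneg(3)[OF less_imp_le[OF t]]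
      unfolding dPhiE_def by auto
    then show ?thesis using False t by simp
  qed
qed

lemma psi_0: "psi p 0 = 0"
  unfolding psi_def by (simp add: zero_ereal_def[symmetric])

lemma psi_eq:
  assumes t: "0 < t" and P: "Phi_summable t"
  shows "psi p t = (if tdPhi_summable t then ereal (tdPhi t / Phi t) else \<infinity>)"
proof -
  have "0 < Phi t" using Phi_pos[OF P] t by simp
  then show ?thesis
    unfolding psi_def times_dPhiE_eq[OF t] PhiE_eq[OF less_imp_le[OF t]] using P
    by (cases "tdPhi_summable t") (auto simp: ereal_divide_ereal ereal_divide)
qed

lemma excess_strict_mono:
  assumes s: "0 \<le> s" "s < t" and P: "Phi_summable t" and G: "tdPhi_summable t"
  shows "excess s < excess t"
proof -
  have Ps: "Phi_summable s" and Gs: "tdPhi_summable s"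
    using Phi_summable_mono[OF P] tdPhi_summable_mono[OF G] s by auto
  obtain K where K: "2 \<le> K" "0 < p K" by (rule obtain_big_offspring)
  have sm: "(\<lambda>k. (real k - 1) * p k * t ^ k - (real k - 1) * p k * s ^ k) sums (excess t - excess s)"
    by (intro sums_diff excess_sums P G Ps Gs)
  have nn: "0 \<le> (real k - 1) * p k * t ^ k - (real k - 1) * p k * s ^ k" for k
  proof (cases k)
    case (Suc m)
    have "s ^ k \<le> t ^ k" using s by (intro power_mono) auto
    then have "0 \<le> (real k - 1) * p k * (t ^ k - s ^ k)" using Suc by (simp add: p_nonneg)
    then show ?thesis by (simp add: algebra_simps)
  qed simp
  have "s ^ K < t ^ K" using s K by (intro power_strict_mono) auto
  then have "0 < (real K - 1) * p K * (t ^ K - s ^ K)" using K by simp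
  then have pos: "0 < (real K - 1) * p K * t ^ K - (real K - 1) * p K * s ^ K"
    by (simp add: algebra_simps)
  show ?thesis using suminf_pos2[OF sums_summable[OF sm] nn pos] sums_unique[OF sm] by simp
qed

lemma excess_mono:
  "0 \<le> s \<Longrightarrow> s \<le> t \<Longrightarrow> Phi_summable t \<Longrightarrow> tdPhi_summable t \<Longrightarrow> excess s \<le> excess t"
  using excess_strict_mono[of s t] by (cases "s = t") auto

lemma excess_root_unique:
  assumes "0 \<le> x" "Phi_summable x" "tdPhi_summable x" "excess x = 0"
    and "0 \<le> y" "Phi_summable y" "tdPhi_summable y" "excess y = 0"
  shows "x = y"
proof (rule ccontr)
  assume "x \<noteq> y"
  then consider "x < y" | "y < x" by linarith
  then show False using excess_strict_mono[of x y] excess_strict_mono[of y x] assms by cases auto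
qed

text \<open>The key inequality behind \<open>inf\<^sub>t \<Phi>(t)/t = \<Phi>(\<tau>)/\<tau>\<close>: summing the tangent inequality
  for \<open>t\<^sup>k\<close> against \<open>p\<^sub>k\<close> gives \<open>\<tau> \<Phi>(t) - t \<Phi>(\<tau>) \<ge> (\<tau> - t)(\<Phi>(\<tau>) - \<tau> \<Phi>'(\<tau>))\<close>.\<close>

lemma Phi_ratio_minimal:
  assumes tau: "0 < \<tau>" "Phi_summable \<tau>" "tdPhi_summable \<tau>" "excess \<tau> \<le> 0"
    and t: "0 \<le> t" "Phi_summable t" and cond: "excess \<tau> = 0 \<or> t \<le> \<tau>"
  shows "t * Phi \<tau> \<le> \<tau> * Phi t \<and> (t \<noteq> \<tau> \<longrightarrow> t * Phi \<tau> < \<tau> * Phi t)"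
proof -
  define d where "d k = \<tau> * (p k * t ^ k) + \<tau> * ((real k - 1) * p k * \<tau> ^ k)
    - t * (real k * p k * \<tau> ^ k)" for k
  define D where "D = \<tau> * Phi t + \<tau> * excess \<tau> - t * tdPhi \<tau>"
  have sm: "d sums D"
    unfolding d_def D_def by (intro sums_diff sums_add sums_mult Phi_sums excess_sums tdPhi_sums tau t)
  have dk: "d k = p k * (\<tau> * t ^ k + (real k - 1) * \<tau> ^ (k + 1) - real k * \<tau> ^ k * t)" for k
    by (simp add: d_def algebra_simps)
  have nn: "0 \<le> d k" for k
    unfolding dk using power_above_tangent[OF t(1) tau(1), of k] by (simp add: p_nonneg)
  have D0: "0 \<le> D" using sums_unique[OF sm] suminf_nonneg[OF sums_summable[OF sm] nn] by simp
  have Dpos: "0 < D" if "t \<noteq> \<tau>"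
  proof -
    obtain K where K: "2 \<le> K" "0 < p K" by (rule obtain_big_offspring)
    have "0 < d K" unfolding dk using power_strictly_above_tangent[OF t(1) tau(1) K(1) that] K(2)
      by simp
    then show "0 < D" using sums_unique[OF sm] suminf_pos2[OF sums_summable[OF sm] nn] by simp
  qed
  have "\<tau> * Phi t - t * Phi \<tau> = D + (\<tau> - t) * (Phi \<tau> - tdPhi \<tau>)"
    unfolding D_def excess_def by (simp add: algebra_simps)
  moreover have "0 \<le> (\<tau> - t) * (Phi \<tau> - tdPhi \<tau>)" using cond tau(4) by (auto simp: excess_def)
  ultimately show ?thesis using D0 Dpos by auto
qed

lemma tdPhi_Phi_cross_le:
  assumes s: "0 \<le> s" "s \<le> t" and P: "Phi_summable t" and G: "tdPhi_summable t"
  shows "tdPhi s * Phi t \<le> tdPhi t * Phi s"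
proof -
  have Ps: "Phi_summable s" and Gs: "tdPhi_summable s"
    using Phi_summable_mono[OF P] tdPhi_summable_mono[OF G] s by auto
  have l1: "(\<lambda>N. (\<Sum>k<N. real k * p k * s ^ k) * (\<Sum>j<N. p j * t ^ j)) \<longlonglongrightarrow> tdPhi s * Phi t"
    by (intro tendsto_mult sums_def[THEN iffD1] tdPhi_sums Phi_sums Gs P)
  have l2: "(\<lambda>N. (\<Sum>k<N. real k * p k * t ^ k) * (\<Sum>j<N. p j * s ^ j)) \<longlonglongrightarrow> tdPhi t * Phi s"
    by (intro tendsto_mult sums_def[THEN iffD1] tdPhi_sums Phi_sums G Ps)
  show ?thesis
    by (rule LIMSEQ_le[OF l1 l2]) (use sum_index_weighted_powers_cross_le[OF p_nonneg s] in auto)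
qed

lemma isCont_excess:
  assumes x: "0 \<le> x" "ereal x < rho"
  shows "isCont excess x"
proof -
  obtain K where K: "ereal x < ereal K" "ereal K < rho" using ereal_dense2[OF x(2)] by blast
  have K0: "0 \<le> K" using x K by simp
  have sP: "summable (\<lambda>n. p n * K ^ n)" and sG: "summable (\<lambda>n. (real n * p n) * K ^ n)"
    using summable_below_rho[OF K0 K(2)] unfolding Phi_summable_def tdPhi_summable_def by simp_all
  have nx: "norm x < norm K" using x K by simp
  have c1: "isCont (\<lambda>x. \<Sum>n. p n * x ^ n) x" by (rule isCont_powser[OF sP nx])
  have c2: "isCont (\<lambda>x. \<Sum>n. (real n * p n) * x ^ n) x" by (rule isCont_powser[OF sG nx])
  have "excess = (\<lambda>x. (\<Sum>n. (real n * p n) * x ^ n) - (\<Sum>n. p n * x ^ n))"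
    by (simp add: fun_eq_iff excess_def tdPhi_def Phi_def)
  then show ?thesis using continuous_diff[OF c2 c1] by simp
qed

lemma excess_root_below:
  assumes t1: "0 \<le> t1" "ereal t1 < rho" "0 < excess t1"
  shows "\<exists>\<tau>. 0 < \<tau> \<and> \<tau> < t1 \<and> excess \<tau> = 0"
proof -
  have "\<exists>x\<ge>0. x \<le> t1 \<and> excess x = 0"
  proof (rule IVT)
    show "excess 0 \<le> 0" using excess_0 p0 by simp
    show "0 \<le> excess t1" using t1 by simp
    show "0 \<le> t1" by (rule t1)
    show "\<forall>x. 0 \<le> x \<and> x \<le> t1 \<longrightarrow> isCont excess x"
    proof (intro allI impI)
      fix x assume "0 \<le> x \<and> x \<le> t1"
      moreover from this have "ereal x < rho" using t1 by (meson ereal_less_eq(3) le_less_trans)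
      ultimately show "isCont excess x" using isCont_excess by auto
    qed
  qed
  then obtain x where x: "0 \<le> x" "x \<le> t1" "excess x = 0" by auto
  have "x \<noteq> 0" using x excess_0 p0 by auto
  moreover have "x \<noteq> t1" using x t1 by auto
  ultimately show ?thesis using x by (intro exI[of _ x]) auto
qed

lemma psi_nonneg:
  assumes "0 \<le> t" "Phi_summable t"
  shows "0 \<le> psi p t"
proof (cases "t = 0")
  case False
  then have "0 < t" using assms by simp
  then show ?thesis using psi_eq[OF _ assms(2)] tdPhi_nonneg[of t] Phi_pos[OF assms(2)] by auto
qed (simp add: psi_0)

lemma psi_mono:
  assumes s: "0 \<le> s" "s \<le> t" and t: "ereal t < rho"
  shows "psi p s \<le> psi p t"
proof -
  have t0: "0 \<le> t" using s by simp
  have P: "Phi_summable t" and G: "tdPhi_summable t" using summable_below_rho[OF t0 t] by auto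
  have Ps: "Phi_summable s" and Gs: "tdPhi_summable s"
    using Phi_summable_mono[OF P] tdPhi_summable_mono[OF G] s by auto
  show ?thesis
  proof (cases "s = 0")
    case True then show ?thesis using psi_nonneg[OF t0 P] by (simp add: psi_0)
  next
    case False
    then have "0 < s" "0 < t" using s by simp_all
    moreover have "0 < Phi s" "0 < Phi t" using Phi_pos Ps P s t0 by auto
    moreover have "tdPhi s * Phi t \<le> tdPhi t * Phi s" by (rule tdPhi_Phi_cross_le[OF s P G])
    ultimately show ?thesis using psi_eq[of s] psi_eq[of t] Ps P Gs G
      by (simp add: divide_simps mult.commute)
  qed
qed

lemma one_less_psi:
  assumes "0 \<le> t" "ereal t < rho" "0 < excess t"
  shows "1 < psi p t"
proof -
  have P: "Phi_summable t" and G: "tdPhi_summable t" using summable_below_rho assms by auto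
  have "t \<noteq> 0" using assms excess_0 p0 by auto
  then have "0 < t" using assms by simp
  moreover have "0 < Phi t" using Phi_pos P assms by simp
  ultimately show ?thesis using psi_eq[OF _ P] G assms(3) by (simp add: excess_def)
qed

lemma psi_eq_1_iff:
  assumes "0 \<le> t" "Phi_summable t"
  shows "psi p t = 1 \<longleftrightarrow> 0 < t \<and> tdPhi_summable t \<and> excess t = 0"
proof (cases "t = 0")
  case True then show ?thesis by (simp add: psi_0)
next
  case False
  then have "0 < t" using assms by simp
  moreover have "0 < Phi t" using Phi_pos assms by simp
  ultimately show ?thesis using psi_eq[OF _ assms(2)] by (auto simp: excess_def field_simps)
qed

definition excess_partial :: "nat \<Rightarrow> real \<Rightarrow> real" where
  "excess_partial N t = (\<Sum>k<N. (real k - 1) * p k * t ^ k)"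

lemma excess_partial_le:
  assumes "0 \<le> t" "Phi_summable t" "tdPhi_summable t" "1 \<le> N"
  shows "excess_partial N t \<le> excess t"
  unfolding excess_partial_def sums_unique[OF excess_sums[OF assms(2,3)]]
  by (rule sum_le_suminf[OF sums_summable[OF excess_sums[OF assms(2,3)]]])
    (use assms in \<open>auto simp: p_nonneg\<close>)

lemma excess_pos_below_rho_of_partial:
  assumes r: "0 < r" "rho = ereal r" and N: "0 < excess_partial N r"
  shows "\<exists>t. 0 \<le> t \<and> ereal t < rho \<and> 0 < excess t"
proof -
  have N1: "1 \<le> N" using N by (cases N) (auto simp: excess_partial_def)
  have "((\<lambda>t. excess_partial N t) \<longlongrightarrow> excess_partial N r) (at_left r)"
    unfolding excess_partial_def by (intro tendsto_intros)
  then have "\<forall>\<^sub>F t in at_left r. 0 < excess_partial N t" using N by (rule order_tendstoD)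
  moreover have "\<forall>\<^sub>F t in at_left r. t \<in> {0<..<r}" by (rule eventually_at_left_real[OF r(1)])
  ultimately obtain t where t: "0 < excess_partial N t" "t \<in> {0<..<r}"
    using eventually_happens'[OF trivial_limit_at_left_real eventually_conj] by blast
  then have "ereal t < rho" "0 \<le> t" using r by auto
  moreover from this have "excess_partial N t \<le> excess t"
    using summable_below_rho by (intro excess_partial_le N1) auto
  ultimately show ?thesis using t by (intro exI[of _ t]) auto
qed

lemma excess_pos_below_rho_infinite:
  assumes "rho = \<infinity>"
  shows "\<exists>t. 0 \<le> t \<and> ereal t < rho \<and> 0 < excess t"
proof -
  obtain K where K: "2 \<le> K" "0 < p K" by (rule obtain_big_offspring)
  define c where "c = (real K - 1) * p K"
  define t where "t = 1 + p 0 / c"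
  have c: "0 < c" using K by (simp add: c_def)
  have t: "1 \<le> t" unfolding t_def using c p0 by simp
  have "ereal t < rho" using assms by simp
  then have P: "Phi_summable t" and G: "tdPhi_summable t" using summable_below_rho t by auto
  have "(\<Sum>k\<in>{0, K}. (real k - 1) * p k * t ^ k) \<le> excess_partial (K + 1) t"
    unfolding excess_partial_def by (rule sum_mono2) (use K t in \<open>auto simp: p_nonneg\<close>)
  moreover have "(\<Sum>k\<in>{0, K}. (real k - 1) * p k * t ^ k) = - p 0 + c * t ^ K"
    using K by (simp add: c_def)
  moreover have "c * t \<le> c * t ^ K"
    using c t K power_increasing[of 1 K t] by (intro mult_left_mono) auto
  moreover have "c * t = c + p 0" using c by (simp add: t_def distrib_left)
  ultimately have "0 < excess_partial (K + 1) t" using c by linarith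
  moreover have "excess_partial (K + 1) t \<le> excess t" using t by (intro excess_partial_le P G) auto
  ultimately show ?thesis using t \<open>ereal t < rho\<close> by (intro exI[of _ t]) auto
qed

lemma summable_excess_series:
  assumes r: "0 \<le> r" and sc: "summable (\<lambda>k. (real k - 1) * p k * r ^ k)"
  shows "Phi_summable r" "tdPhi_summable r"
proof -
  show "Phi_summable r" unfolding Phi_summable_def
  proof (rule summable_comparison_test'[OF sc, of 2])
    fix n :: nat assume "2 \<le> n"
    then have "p n * r ^ n \<le> (real n - 1) * p n * r ^ n"
      using r mult_right_mono[of 1 "real n - 1" "p n * r ^ n"] by (simp add: p_nonneg algebra_simps)
    then show "norm (p n * r ^ n) \<le> (real n - 1) * p n * r ^ n" using r by (simp add: p_nonneg abs_mult)
  qed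
  then have "summable (\<lambda>k. (real k - 1) * p k * r ^ k + p k * r ^ k)"
    unfolding Phi_summable_def by (rule summable_add[OF sc])
  then show "tdPhi_summable r" unfolding tdPhi_summable_def by (simp add: algebra_simps)
qed

text \<open>At a finite \<open>\<rho>\<close> where a
  series diverges, the partial sums of the excess series are eventually positive.\<close>

lemma excess_pos_below_rho:
  defines "r \<equiv> real_of_ereal rho"
  assumes c: "rho = \<infinity> \<or> \<not> Phi_summable r \<or> \<not> tdPhi_summable r \<or> 0 < excess r"
  shows "\<exists>t. 0 \<le> t \<and> ereal t < rho \<and> 0 < excess t"
proof (cases rule: rho_finite_cases)
  case 1
  then show ?thesis by (rule excess_pos_below_rho_infinite)
next
  case (2 r')
  then have rr: "rho = ereal r" "1 \<le> r" unfolding r_def by simp_all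
  define c where "c k = (real k - 1) * p k * r ^ k" for k
  have "\<exists>N. 0 < excess_partial N r"
  proof (cases "Phi_summable r \<and> tdPhi_summable r")
    case True
    then have "0 < excess r" using c rr by auto
    moreover have "(\<lambda>N. excess_partial N r) \<longlonglongrightarrow> excess r"
      unfolding excess_partial_def using excess_sums[of r] True by (simp add: sums_def)
    ultimately have "\<forall>\<^sub>F N in sequentially. 0 < excess_partial N r" by (simp add: order_tendstoD)
    then show ?thesis by (auto simp: eventually_sequentially)
  next
    case False
    then have "\<not> summable c" using summable_excess_series rr unfolding c_def by auto
    moreover have "1 \<le> k \<Longrightarrow> 0 \<le> c k" for k using rr by (simp add: c_def p_nonneg)
    ultimately obtain N where "0 < (\<Sum>k<N. c k)"
      using nonsummable_partial_sums_unbounded[of c 0] by auto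
    then show ?thesis unfolding excess_partial_def c_def by auto
  qed
  then show ?thesis using excess_pos_below_rho_of_partial[of r] rr by auto
qed

lemma one_less_gw_nu:
  assumes "rho = \<infinity> \<or> \<not> Phi_summable (real_of_ereal rho)"
  shows "1 < gw_nu p"
proof -
  obtain t1 where t1: "0 \<le> t1" "ereal t1 < rho" "0 < excess t1"
    using excess_pos_below_rho assms by blast
  have "1 < psi p t1" by (rule one_less_psi[OF t1])
  show ?thesis
  proof (cases rule: rho_finite_cases)
    case 1
    have "(psi p \<longlongrightarrow> (SUP t\<in>{0..}. psi p t)) at_top"
      by (rule mono_tendsto_SUP_at_top) (use 1 in \<open>auto intro: psi_mono\<close>)
    then have "Lim at_top (psi p) = (SUP t\<in>{0..}. psi p t)" by (intro tendsto_Lim) auto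
    moreover have "psi p t1 \<le> (SUP t\<in>{0..}. psi p t)" using t1 by (intro SUP_upper) auto
    ultimately show ?thesis using 1 \<open>1 < psi p t1\<close> unfolding gw_nu_def by (simp add: Let_def)
  next
    case (2 r)
    then have "PhiE p r = \<infinity>" using PhiE_eq[of r] assms by simp
    have "(psi p \<longlongrightarrow> (SUP t\<in>{0..<r}. psi p t)) (at_left r)"
      by (rule mono_tendsto_SUP_at_left) (use 2 in \<open>auto intro: psi_mono\<close>)
    then have "Lim (at_left r) (psi p) = (SUP t\<in>{0..<r}. psi p t)"
      by (intro tendsto_Lim) (auto simp: trivial_limit_at_left_real)
    moreover have "psi p t1 \<le> (SUP t\<in>{0..<r}. psi p t)" using t1 2 by (intro SUP_upper) auto
    ultimately show ?thesis using 2 \<open>1 < psi p t1\<close> \<open>PhiE p r = \<infinity>\<close>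
      unfolding gw_nu_def by (simp add: Let_def order_less_le_trans)
  qed
qed

lemma gw_nu_eq_psi_rho:
  assumes "rho = ereal r" "Phi_summable r"
  shows "gw_nu p = psi p r"
proof -
  have "0 \<le> r" using one_le_rho assms(1) by simp
  then have "PhiE p r \<noteq> \<infinity>" using PhiE_eq[of r] assms by simp
  then show ?thesis using assms unfolding gw_nu_def by (simp add: Let_def)
qed

lemma PsiX_eq_1_iff:
  assumes "0 \<le> y" "ereal y \<le> rho" and nu: "\<not> Phi_summable y \<Longrightarrow> gw_nu p \<noteq> 1"
  shows "PsiX p y = 1 \<longleftrightarrow> 0 < y \<and> Phi_summable y \<and> tdPhi_summable y \<and> excess y = 0"
  using PhiE_eq[OF assms(1)] psi_eq_1_iff[OF assms(1)] nu unfolding PsiX_def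
  by (cases "Phi_summable y") auto

text \<open>The two regimes in the definition of \<open>\<tau>\<close>: either \<open>\<Psi>(\<rho>) < 1\<close> and \<open>\<tau> = \<rho>\<close>, or \<open>\<Psi>\<close>
  reaches \<open>1\<close> at a unique root of the excess.\<close>

definition boundary_regime :: bool where
  "boundary_regime \<longleftrightarrow> rho \<noteq> \<infinity> \<and> Phi_summable (real_of_ereal rho)
     \<and> tdPhi_summable (real_of_ereal rho) \<and> excess (real_of_ereal rho) < 0"

lemma gw_tau_boundary_regime:
  assumes "boundary_regime"
  shows "gw_tau p = real_of_ereal rho"
proof -
  from assms obtain r where r: "rho = ereal r" "1 \<le> r" "Phi_summable r" "tdPhi_summable r" "excess r < 0"
    unfolding boundary_regime_def by (cases rule: rho_finite_cases) auto
  have "0 < Phi r" using Phi_pos r by simp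
  then have "gw_nu p < 1"
    using gw_nu_eq_psi_rho[of r] psi_eq[of r] r by (simp add: excess_def)
  then have "\<not> 1 \<le> gw_nu p" by simp
  then show ?thesis unfolding gw_tau_def by simp
qed

lemma excess_root_exists:
  assumes "\<not> boundary_regime"
  shows "\<exists>\<tau>. 0 < \<tau> \<and> ereal \<tau> \<le> rho \<and> Phi_summable \<tau> \<and> tdPhi_summable \<tau> \<and> excess \<tau> = 0"
proof (cases "\<exists>r. rho = ereal r \<and> Phi_summable r \<and> tdPhi_summable r \<and> excess r = 0")
  case True
  then obtain r where "rho = ereal r" "Phi_summable r" "tdPhi_summable r" "excess r = 0" by blast
  moreover have "1 \<le> r" using one_le_rho \<open>rho = ereal r\<close> by simp
  ultimately show ?thesis by (intro exI[of _ r]) auto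
next
  case False
  then have "rho = \<infinity> \<or> \<not> Phi_summable (real_of_ereal rho) \<or> \<not> tdPhi_summable (real_of_ereal rho)
      \<or> 0 < excess (real_of_ereal rho)"
    using assms unfolding boundary_regime_def by (cases rule: rho_finite_cases) auto
  then obtain t1 where t1: "0 \<le> t1" "ereal t1 < rho" "0 < excess t1"
    using excess_pos_below_rho by blast
  obtain \<tau> where \<tau>: "0 < \<tau>" "\<tau> < t1" "excess \<tau> = 0" using excess_root_below[OF t1] by blast
  then have "ereal \<tau> < ereal t1" by simp
  then have "ereal \<tau> < rho" using t1(2) by (rule less_trans)
  then show ?thesis using \<tau> summable_below_rho[of \<tau>] by (intro exI[of _ \<tau>]) auto
qed

lemma one_le_gw_nu:
  assumes "\<not> boundary_regime"
  shows "1 \<le> gw_nu p"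
proof (cases rule: rho_finite_cases)
  case 1
  then show ?thesis using one_less_gw_nu by simp
next
  case (2 r)
  show ?thesis
  proof (cases "Phi_summable r")
    case False
    then show ?thesis using one_less_gw_nu 2 by simp
  next
    case True
    have "0 < Phi r" using Phi_pos True 2 by simp
    moreover have "tdPhi_summable r \<Longrightarrow> 0 \<le> excess r"
      using assms 2 True unfolding boundary_regime_def by auto
    ultimately show ?thesis
      using gw_nu_eq_psi_rho[OF 2(1) True] psi_eq[of r] True 2 by (auto simp: excess_def)
  qed
qed

lemma gw_tau_excess_root:
  assumes \<tau>: "0 < \<tau>" "ereal \<tau> \<le> rho" "Phi_summable \<tau>" "tdPhi_summable \<tau>" "excess \<tau> = 0"
    and nu: "1 \<le> gw_nu p"
  shows "gw_tau p = \<tau>"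
proof -
  have nu_ne_1: "gw_nu p \<noteq> 1" if y: "\<not> Phi_summable y" "0 \<le> y" "ereal y \<le> rho" for y
  proof -
    have "\<not> ereal y < rho" using Phi_summable_below_rho[of y] y by auto
    then have "rho = ereal y" using y(3) by simp
    then show ?thesis using one_less_gw_nu y by simp
  qed
  have "(THE \<tau>. 0 \<le> \<tau> \<and> ereal \<tau> \<le> rho \<and> PsiX p \<tau> = 1) = \<tau>"
  proof (rule the_equality)
    show "0 \<le> \<tau> \<and> ereal \<tau> \<le> rho \<and> PsiX p \<tau> = 1"
      using \<tau> PsiX_eq_1_iff[of \<tau>] nu_ne_1[of \<tau>] by simp
    fix y assume "0 \<le> y \<and> ereal y \<le> rho \<and> PsiX p y = 1"
    then have "0 < y \<and> Phi_summable y \<and> tdPhi_summable y \<and> excess y = 0"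
      using PsiX_eq_1_iff[of y] nu_ne_1[of y] by auto
    then show "y = \<tau>" using excess_root_unique[of y \<tau>] \<tau> by simp
  qed
  then show ?thesis unfolding gw_tau_def using nu by simp
qed

lemma gw_tau_props:
  defines "\<tau> \<equiv> gw_tau p"
  shows "0 < \<tau> \<and> ereal \<tau> \<le> rho \<and> Phi_summable \<tau> \<and> tdPhi_summable \<tau> \<and> excess \<tau> \<le> 0
    \<and> (excess \<tau> = 0 \<or> ereal \<tau> = rho)"
proof (cases boundary_regime)
  case True
  then obtain r where "rho = ereal r" "1 \<le> r" unfolding boundary_regime_def
    by (cases rule: rho_finite_cases) auto
  then show ?thesis
    using True gw_tau_boundary_regime unfolding \<tau>_def boundary_regime_def by auto
next
  case False
  then obtain \<tau>0 where "0 < \<tau>0" "ereal \<tau>0 \<le> rho" "Phi_summable \<tau>0" "tdPhi_summable \<tau>0"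
    "excess \<tau>0 = 0"
    using excess_root_exists by blast
  then show ?thesis using gw_tau_excess_root one_le_gw_nu[OF False] unfolding \<tau>_def by simp
qed

abbreviation tau :: real where "tau \<equiv> gw_tau p"

definition min_ratio :: real where "min_ratio = Phi tau / tau"

lemma tau_pos: "0 < tau" and tau_le_rho: "ereal tau \<le> rho"
  and Phi_summable_tau: "Phi_summable tau" and tdPhi_summable_tau: "tdPhi_summable tau"
  and excess_tau_nonpos: "excess tau \<le> 0" and excess_tau_cases: "excess tau = 0 \<or> ereal tau = rho"
  using gw_tau_props by auto

lemma Phi_tau_pos: "0 < Phi tau"
  using Phi_pos Phi_summable_tau tau_pos by simp

lemma min_ratio_pos: "0 < min_ratio"
  unfolding min_ratio_def using Phi_tau_pos tau_pos by simp

lemma min_ratio_le: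
  assumes t: "0 < t" "Phi_summable t"
  shows "min_ratio \<le> Phi t / t \<and> (t \<noteq> tau \<longrightarrow> min_ratio < Phi t / t)"
proof -
  have "ereal t \<le> rho" using Phi_summable_imp_le_rho[OF t(2)] t by simp
  then have "excess tau = 0 \<or> t \<le> tau" using excess_tau_cases by (metis ereal_less_eq(3))
  then have "t * Phi tau \<le> tau * Phi t \<and> (t \<noteq> tau \<longrightarrow> t * Phi tau < tau * Phi t)"
    using t by (intro Phi_ratio_minimal tau_pos Phi_summable_tau tdPhi_summable_tau excess_tau_nonpos)
      simp_all
  then show ?thesis unfolding min_ratio_def using t tau_pos by (simp add: divide_simps mult.commute)
qed

lemma min_ratio_le_1: "min_ratio \<le> 1"
  using min_ratio_le[of 1] Phi_summable_1 Phi_1 by simp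

lemma min_ratio_eq_1_iff: "min_ratio = 1 \<longleftrightarrow> tau = 1"
  using min_ratio_le[of 1] Phi_summable_1 Phi_1 by (auto simp: min_ratio_def)

lemma PhiE_tau: "PhiE p tau = ereal (Phi tau)"
  using PhiE_eq[of tau] tau_pos Phi_summable_tau by simp

lemma INF_PhiE_div: "(INF t\<in>{0<..}. PhiE p t / ereal t) = ereal min_ratio"
proof (rule antisym)
  show "(INF t\<in>{0<..}. PhiE p t / ereal t) \<le> ereal min_ratio"
    using tau_pos by (intro INF_lower2[of tau]) (auto simp: PhiE_tau min_ratio_def ereal_divide)
next
  show "ereal min_ratio \<le> (INF t\<in>{0<..}. PhiE p t / ereal t)"
  proof (rule INF_greatest)
    fix t :: real assume "t \<in> {0<..}"
    then show "ereal min_ratio \<le> PhiE p t / ereal t"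
      using min_ratio_le[of t] PhiE_eq[of t]
      by (cases "Phi_summable t") (auto simp: ereal_divide ereal_divide_ereal)
  qed
qed

lemma gw_mean_eq: "gw_mean p = (if tdPhi_summable 1 then ereal (tdPhi 1) else \<infinity>)"
  unfolding gw_mean_def tdPhi_summable_def tdPhi_def
  using summable_ereal[of "\<lambda>k. real k * p k"] suminf_ereal'[of "\<lambda>k. real k * p k"]
  by (auto simp: p_nonneg)

lemma excess_1: "excess 1 = tdPhi 1 - 1"
  by (simp add: excess_def Phi_1)

lemma tau_lt_1_if_supercritical:
  assumes "1 < gw_mean p"
  shows "tau < 1"
proof (rule ccontr)
  assume "\<not> tau < 1"
  then have "1 \<le> tau" by simp
  then have G1: "tdPhi_summable 1" using tdPhi_summable_mono[OF tdPhi_summable_tau] by simp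
  then have "0 < excess 1" using assms gw_mean_eq excess_1 by simp
  moreover have "excess 1 \<le> excess tau"
    using excess_mono[OF _ \<open>1 \<le> tau\<close> Phi_summable_tau tdPhi_summable_tau] by simp
  ultimately show False using excess_tau_nonpos by simp
qed

lemma excess_1_neg_if_subcritical:
  assumes "gw_mean p < 1"
  shows "tdPhi_summable 1" "excess 1 < 0"
  using assms gw_mean_eq excess_1 by (cases "tdPhi_summable 1"; simp)+

lemma tau_gt_1_if_subcritical:
  assumes "gw_mean p < 1" "1 < rho"
  shows "1 < tau"
  using excess_tau_cases
proof
  assume "excess tau = 0"
  show ?thesis
  proof (rule ccontr)
    assume "\<not> 1 < tau"
    then have "excess tau \<le> excess 1"
      using excess_mono[OF less_imp_le[OF tau_pos] _ Phi_summable_1]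
        excess_1_neg_if_subcritical[OF assms(1)] by simp
    then show False using \<open>excess tau = 0\<close> excess_1_neg_if_subcritical[OF assms(1)] by simp
  qed
next
  assume "ereal tau = rho"
  then have "ereal 1 < ereal tau" using assms(2) by (simp add: one_ereal_def)
  then show ?thesis by simp
qed

lemma tau_eq_1_if_critical:
  assumes "gw_mean p = 1"
  shows "tau = 1"
proof -
  have G1: "tdPhi_summable 1" and "excess 1 = 0"
    using assms gw_mean_eq excess_1 by (cases "tdPhi_summable 1"; simp)+
  show "tau = 1"
    using excess_tau_cases
  proof
    assume "excess tau = 0"
    then show ?thesis
      using excess_root_unique[of tau 1] tau_pos Phi_summable_tau tdPhi_summable_tau
        Phi_summable_1 G1 \<open>excess 1 = 0\<close> by simp
  next
    assume "ereal tau = rho"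
    then have "ereal 1 \<le> ereal tau" using one_le_rho by (simp add: one_ereal_def)
    then have "1 \<le> tau" by simp
    then show ?thesis
      using excess_strict_mono[of 1 tau] Phi_summable_tau tdPhi_summable_tau
        \<open>excess 1 = 0\<close> excess_tau_nonpos by force
  qed
qed

lemma tau_eq_1_if_subcritical_rho_1:
  assumes "gw_mean p < 1" "rho = 1"
  shows "tau = 1"
  using excess_tau_cases
proof
  assume "excess tau = 0"
  have "tau \<le> 1" using assms tau_le_rho by (simp add: one_ereal_def)
  then have "excess tau \<le> excess 1"
    using excess_mono[OF less_imp_le[OF tau_pos] _ Phi_summable_1]
      excess_1_neg_if_subcritical assms by simp
  then show ?thesis using \<open>excess tau = 0\<close> excess_1_neg_if_subcritical assms by simp
qed (use assms in \<open>simp add: one_ereal_def\<close>)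

lemma tau_eq_1_iff: "tau = 1 \<longleftrightarrow> gw_mean p = 1 \<or> (gw_mean p < 1 \<and> rho = 1)"
proof
  assume "tau = 1"
  then show "gw_mean p = 1 \<or> (gw_mean p < 1 \<and> rho = 1)"
    using excess_tau_cases excess_tau_nonpos tdPhi_summable_tau gw_mean_eq excess_1
    by (auto simp: one_ereal_def)
qed (auto intro: tau_eq_1_if_critical tau_eq_1_if_subcritical_rho_1)

section \<open>The exponential rate of \<open>P(|T| = n)\<close>\<close>

lemma gw_size_prob_le: "gw_size_prob p n \<le> tau * min_ratio ^ n"
proof -
  define x where "x = 1 / min_ratio"
  have x: "0 < x" unfolding x_def using min_ratio_pos by simp
  have "x * (\<Sum>k. p k * tau ^ k) \<le> tau"
    unfolding x_def min_ratio_def Phi_def[symmetric] using Phi_tau_pos tau_pos by simp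
  then have "gw_size_gf_upto p n x \<le> tau"
    using x tau_pos Phi_summable_tau unfolding Phi_summable_def
    by (intro gw_size_gf_upto_le[of p] p_nonneg) simp_all
  moreover have "gw_size_prob p n * x ^ n \<le> gw_size_gf_upto p n x"
    unfolding gw_size_gf_upto_def using x
    by (intro member_le_sum) (simp_all add: gw_size_prob_nonneg[of p, OF p_nonneg])
  ultimately have "gw_size_prob p n \<le> tau / x ^ n" using x by (simp add: field_simps)
  then show ?thesis unfolding x_def using min_ratio_pos by (simp add: power_divide)
qed

text \<open>Conversely no smaller geometric rate is possible: the size generating function
  would converge at some \<open>x > 1 / min_ratio\<close>, and its value \<open>z\<close> would satisfy
  \<open>\<Phi>(z)/z \<le> 1/x < min_ratio\<close>.\<close>

lemma min_ratio_le_geometric_rate: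
  assumes r: "0 < r" and bound: "\<And>n. gw_size_prob p n \<le> C * r ^ n"
  shows "min_ratio \<le> r"
proof (rule ccontr)
  assume "\<not> min_ratio \<le> r"
  define x where "x = 2 / (min_ratio + r)"
  have x: "0 < x" "r * x < 1" "1 / x < min_ratio"
    unfolding x_def using r \<open>\<not> min_ratio \<le> r\<close> min_ratio_pos by (simp_all add: field_simps)
  have sm: "summable (\<lambda>n. gw_size_prob p n * x ^ n)"
  proof (rule summable_comparison_test'[of "\<lambda>n. C * (r * x) ^ n" 0])
    show "summable (\<lambda>n. C * (r * x) ^ n)" using r x by (intro summable_mult summable_geometric) simp
    show "norm (gw_size_prob p n * x ^ n) \<le> C * (r * x) ^ n" for n
      using mult_right_mono[OF bound[of n], of "x ^ n"] x gw_size_prob_nonneg[of p, OF p_nonneg, of n]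
      by (simp add: power_mult_distrib mult.assoc)
  qed
  define z where "z = (\<Sum>n. gw_size_prob p n * x ^ n)"
  have fixpoint: "summable (\<lambda>k. p k * z ^ k) \<and> x * (\<Sum>k. p k * z ^ k) \<le> z"
    unfolding z_def by (rule gw_size_gf_fixpoint_ineq[of p, OF p_nonneg x(1) sm])
  have "gw_size_prob p 1 * x ^ 1 \<le> z"
    unfolding z_def using sum_le_suminf[OF sm, of "{1}"] x gw_size_prob_nonneg[of p, OF p_nonneg]
    by simp
  moreover have "0 < p 0 * x" using p0 x by simp
  ultimately have z: "0 < z" using gw_size_prob_1 by simp
  have "Phi z / z \<le> 1 / x" using fixpoint x z by (simp add: Phi_def field_simps)
  moreover have "min_ratio \<le> Phi z / z"
    using min_ratio_le[OF z] fixpoint by (simp add: Phi_summable_def)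
  ultimately show False using x(3) by simp
qed

text \<open>Indexed by the number of edges, \<open>P(|T| = n + 1) / P(\<xi> = 0)\<close> is supermultiplicative
  (by grafting).\<close>

definition edge_size_prob :: "nat \<Rightarrow> real" where
  "edge_size_prob n = gw_size_prob p (Suc n) / p 0"

lemma edge_size_prob_nonneg: "0 \<le> edge_size_prob n"
  unfolding edge_size_prob_def using gw_size_prob_nonneg[of p, OF p_nonneg] p0 by simp

lemma edge_size_prob_supermult: "edge_size_prob m * edge_size_prob n \<le> edge_size_prob (m + n)"
  unfolding edge_size_prob_def using gw_size_prob_supermult[of p, OF p_nonneg, of "Suc m" "Suc n"] p0
  by (simp add: field_simps)

lemma gw_size_prob_eq_edge_size_prob: "1 \<le> n \<Longrightarrow> gw_size_prob p n = p 0 * edge_size_prob (n - 1)"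
  unfolding edge_size_prob_def using p0 by simp

lemma edge_size_prob_pos_span_dvd: "0 < edge_size_prob n \<Longrightarrow> gw_span p dvd n"
  unfolding edge_size_prob_def using gw_size_prob_pos_span_dvd[of p, OF p_nonneg, of "Suc n"] p0
  by (simp add: zero_less_divide_iff)

lemma edge_size_prob_eventually_pos: "\<exists>N. \<forall>s\<ge>N. gw_span p dvd s \<longrightarrow> 0 < edge_size_prob s"
proof -
  define M where "M = {s. 0 < edge_size_prob s}"
  have "0 \<in> M" unfolding M_def edge_size_prob_def using gw_size_prob_1 p0 by simp
  have add: "a + b \<in> M" if "a \<in> M" "b \<in> M" for a b
  proof -
    have "0 < edge_size_prob a * edge_size_prob b" using that by (simp add: M_def)
    then show ?thesis using edge_size_prob_supermult[of a b] by (simp add: M_def)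
  qed
  have big: "k \<in> M" if "0 < p k" for k
  proof -
    have "0 < p k * p 0 ^ k" using that p0 by simp
    also have "\<dots> \<le> gw_size_prob p (Suc k)" using gw_size_prob_star_ge[of p, OF p_nonneg, of k] by simp
    finally show ?thesis unfolding M_def edge_size_prob_def using p0 by simp
  qed
  obtain K where K: "2 \<le> K" "0 < p K" by (rule obtain_big_offspring)
  have "Gcd M = gw_span p"
  proof (rule dvd_antisym)
    show "Gcd M dvd gw_span p" unfolding gw_span_def
    proof (rule Gcd_greatest)
      fix k assume "k \<in> {k. 0 < p k}"
      then show "Gcd M dvd k" using big by (simp add: Gcd_dvd)
    qed
    show "gw_span p dvd Gcd M"
      by (rule Gcd_greatest) (simp add: M_def edge_size_prob_pos_span_dvd)
  qed
  moreover have "K \<in> M" "K \<noteq> 0" using big K by auto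
  then obtain N where "\<forall>s\<ge>N. Gcd M dvd s \<longrightarrow> s \<in> M"
    using add_submonoid_contains_large_multiples[OF \<open>0 \<in> M\<close> add] by blast
  ultimately show ?thesis unfolding M_def by auto
qed

lemma exists_edge_size_prob_log_gt:
  assumes "\<mu> < ln min_ratio"
  shows "\<exists>q>0. 0 < edge_size_prob q \<and> \<mu> < ln (edge_size_prob q) / q"
proof (rule ccontr)
  assume contra: "\<not> ?thesis"
  define r where "r = exp \<mu>"
  have r: "0 < r" unfolding r_def by simp
  have "edge_size_prob n \<le> r ^ n" for n
  proof (cases "n = 0 \<or> edge_size_prob n \<le> 0")
    case True
    moreover have "edge_size_prob 0 = 1" using gw_size_prob_1 p0 by (simp add: edge_size_prob_def)
    ultimately show ?thesis using r by (auto intro: order_trans[OF _ zero_le_power])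
  next
    case False
    then have "0 < n" "0 < edge_size_prob n" by auto
    then have "ln (edge_size_prob n) / n \<le> \<mu>" using contra not_less by blast
    then have "ln (edge_size_prob n) \<le> \<mu> * n" using False by (simp add: divide_le_eq)
    then have "edge_size_prob n \<le> exp (\<mu> * n)" using False by (metis exp_le_cancel_iff exp_ln not_le)
    also have "\<dots> = r ^ n" unfolding r_def by (simp add: exp_of_nat_mult[symmetric] mult.commute)
    finally show ?thesis .
  qed
  then have "gw_size_prob p n \<le> (p 0 / r) * r ^ n" for n
  proof (cases n)
    case (Suc m)
    then have "gw_size_prob p n = p 0 * edge_size_prob m"
      using gw_size_prob_eq_edge_size_prob[of n] by simp
    also have "\<dots> \<le> p 0 * r ^ m" using \<open>edge_size_prob m \<le> r ^ m\<close> p0 by simp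
    finally show ?thesis using Suc r by simp
  qed (use r p0 in \<open>simp add: gw_size_prob_0\<close>)
  then have "min_ratio \<le> r" by (rule min_ratio_le_geometric_rate[OF r])
  then show False using assms min_ratio_pos unfolding r_def by (simp add: ln_le_cancel_iff[symmetric])
qed

abbreviation lattice_filter :: "nat filter" where
  "lattice_filter \<equiv> inf sequentially (principal {n. n mod gw_span p = 1 mod gw_span p})"

lemma eventually_lattice_filter:
  assumes "\<And>n. N \<le> n \<Longrightarrow> gw_span p dvd n - 1 \<Longrightarrow> P n"
  shows "eventually P lattice_filter"
  unfolding eventually_inf_principal
  by (rule eventually_sequentiallyI[of "Suc N"])
    (use assms in \<open>auto simp: mod_eq_dvd_iff_nat[symmetric]\<close>)

lemma log_gw_size_prob_lower:
  assumes "c < ln min_ratio"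
  shows "\<exists>B. eventually (\<lambda>n. c * real n + B \<le> ln (gw_size_prob p n)) lattice_filter"
proof -
  let ?b = edge_size_prob and ?d = "gw_span p"
  obtain q where q: "0 < q" "0 < ?b q" "c < ln (?b q) / q"
    using exists_edge_size_prob_log_gt[OF assms] by blast
  obtain N where N: "\<And>s. N \<le> s \<Longrightarrow> ?d dvd s \<Longrightarrow> 0 < ?b s"
    using edge_size_prob_eventually_pos by blast
  obtain B where B: "\<And>n. N \<le> n \<Longrightarrow> ?d dvd n \<Longrightarrow> ln (?b q) / q * real n + B \<le> ln (?b n)"
    using supermult_linear_lower_bound[OF edge_size_prob_nonneg edge_size_prob_supermult N q(1)
      edge_size_prob_pos_span_dvd[OF q(2)] q(2)] by blast
  have "c * real n + (B + ln (p 0) - c) \<le> ln (gw_size_prob p n)"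
    if n: "Suc N \<le> n" "?d dvd n - 1" for n
  proof -
    have "c * real (n - 1) \<le> ln (?b q) / q * real (n - 1)"
      using mult_right_mono[OF less_imp_le[OF q(3)], of "real (n - 1)"] by simp
    moreover have "N \<le> n - 1" using n by simp
    ultimately have "c * real (n - 1) + B \<le> ln (?b (n - 1))" using B[of "n - 1"] n by simp
    moreover have "0 < ?b (n - 1)" using N \<open>N \<le> n - 1\<close> n by simp
    moreover have "ln (gw_size_prob p n) = ln (p 0) + ln (?b (n - 1))"
      using n p0 gw_size_prob_eq_edge_size_prob[of n] \<open>0 < ?b (n - 1)\<close> by (simp add: ln_mult)
    ultimately show ?thesis using n by (simp add: of_nat_diff algebra_simps)
  qed
  then show ?thesis by (blast intro: eventually_lattice_filter)
qed

lemma log_gw_size_prob_upper: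
  "eventually (\<lambda>n. ln (gw_size_prob p n) \<le> ln min_ratio * real n + ln tau) lattice_filter"
proof -
  obtain N where N: "\<And>s. N \<le> s \<Longrightarrow> gw_span p dvd s \<Longrightarrow> 0 < edge_size_prob s"
    using edge_size_prob_eventually_pos by blast
  have "ln (gw_size_prob p n) \<le> ln min_ratio * real n + ln tau"
    if "Suc N \<le> n" "gw_span p dvd n - 1" for n
  proof -
    have "0 < gw_size_prob p n"
      using N[of "n - 1"] that p0 gw_size_prob_eq_edge_size_prob[of n] by simp
    then have "ln (gw_size_prob p n) \<le> ln (tau * min_ratio ^ n)"
      using gw_size_prob_le[of n] tau_pos min_ratio_pos by simp
    then show ?thesis using tau_pos min_ratio_pos by (simp add: ln_mult ln_realpow mult.commute)
  qed
  then show ?thesis by (blast intro: eventually_lattice_filter)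
qed

lemma log_gw_size_prob_limit:
  "((\<lambda>n. ln (gw_size_prob p n) / real n) \<longlongrightarrow> ln min_ratio) lattice_filter"
  by (rule tendsto_div_of_linear_bounds[OF inf_le1 log_gw_size_prob_lower log_gw_size_prob_upper])

end

theorem theorem17p7:
  fixes p :: "nat \<Rightarrow> real"
  assumes dist: "offspring_dist p"
    and p0: "p 0 > 0"
    and pbig: "\<exists>k>1. p k > 0"
  defines "\<tau> \<equiv> gw_tau p"
    and "L \<equiv> ln (real_of_ereal (PhiE p (gw_tau p))) - ln (gw_tau p)"
  shows "0 < \<tau> \<and> ereal \<tau> \<le> conv_radius p \<and> PhiE p \<tau> \<noteq> \<infinity>
    \<and> ((\<lambda>n. ln (gw_size_prob p n) / real n) \<longlongrightarrow> L)
           (inf sequentially (principal {n. n mod gw_span p = 1 mod gw_span p}))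
    \<and> (INF t\<in>{0<..}. PhiE p t / ereal t) = ereal (exp L)
    \<and> L \<le> 0
    \<and> (L = 0 \<longleftrightarrow> (gw_mean p = 1 \<or> (gw_mean p < 1 \<and> conv_radius p = 1)))
    \<and> (gw_mean p > 1 \<longrightarrow> \<tau> < 1)
    \<and> (gw_mean p < 1 \<and> conv_radius p > 1 \<longrightarrow> \<tau> > 1)
    \<and> (gw_mean p = 1 \<or> (gw_mean p < 1 \<and> conv_radius p = 1) \<longrightarrow> \<tau> = 1)"
proof -
  interpret gw_offspring p using dist p0 pbig by unfold_locales
  have L: "L = ln min_ratio"
    unfolding L_def PhiE_tau min_ratio_def using Phi_tau_pos tau_pos by (simp add: ln_div)
  have "L \<le> 0" using L min_ratio_le_1 min_ratio_pos by simp
  moreover have "L = 0 \<longleftrightarrow> tau = 1"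
    using L min_ratio_pos min_ratio_eq_1_iff by (metis exp_ln exp_zero ln_one)
  moreover have "exp L = min_ratio" using L min_ratio_pos by simp
  ultimately show ?thesis
    unfolding \<tau>_def
    using tau_pos tau_le_rho PhiE_tau log_gw_size_prob_limit INF_PhiE_div L tau_eq_1_iff
      tau_lt_1_if_supercritical tau_gt_1_if_subcritical
    by auto
qed

end
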